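(* Let $P$ be a polygonal knot embedded in $\mathbb{R}^3$ consisting of $n$ line segments. If $w(K)$ is the writhe of one orthogonal planar projection $K$ of $P$, then for every orthogonal planar projection $K'$ of $P$, the number $c$ of crossings of $K'$ satisfies $c \ge \frac{1}{16}\left(|w(K)| - 3n\right)$.
   Context: Orthogonal planar projections are taken in general-position directions, so that they are knot diagrams with finitely many transverse double-point crossings carrying over/under information. The writhe $w(K)$ of a diagram is computed by orienting it and assigning to each crossing the sign $+1$ if the oriented undercrossing strand is oriented by the right-hand rule relative to the oriented overcrossing strand and $-1$ otherwise, then summing over all crossings; it is independent of the chosen orientation. *)

theory Defs
  imports "HOL-Analysis.Analysis"
begin

definition seg :: "(nat \<Rightarrow> real^3) \<Rightarrow> nat \<Rightarrow> nat \<Rightarrow> (real^3) set" where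
  "seg v n i = closed_segment (v i) (v (Suc i mod n))"

definition edge_dir :: "(nat \<Rightarrow> real^3) \<Rightarrow> nat \<Rightarrow> nat \<Rightarrow> real^3" where
  "edge_dir v n i = v (Suc i mod n) - v i"

definition adjacent :: "nat \<Rightarrow> nat \<Rightarrow> nat \<Rightarrow> bool" where
  "adjacent n i j \<longleftrightarrow> j = Suc i mod n \<or> i = Suc j mod n"

definition polygonal_knot :: "(nat \<Rightarrow> real^3) \<Rightarrow> nat \<Rightarrow> bool" where
  "polygonal_knot v n \<longleftrightarrow> n \<ge> 3 \<and>
     (\<forall>i<n. v i \<noteq> v (Suc i mod n)) \<and>
     (\<forall>i<n. \<forall>j<n. j = Suc i mod n \<longrightarrow> seg v n i \<inter> seg v n j = {v j}) \<and>
     (\<forall>i<n. \<forall>j<n. i \<noteq> j \<and> \<not> adjacent n i j \<longrightarrow> seg v n i \<inter> seg v n j = {})"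

definition proj :: "real^3 \<Rightarrow> real^3 \<Rightarrow> real^3" where
  "proj u x = x - ((x \<bullet> u) / (u \<bullet> u)) *\<^sub>R u"

definition pseg :: "real^3 \<Rightarrow> (nat \<Rightarrow> real^3) \<Rightarrow> nat \<Rightarrow> nat \<Rightarrow> (real^3) set" where
  "pseg u v n i = proj u ` seg v n i"

text \<open>General position of the projection direction: the projection is a knot diagram
  (no edge projects to a point, adjacent edges' images meet only in the image of the common
  vertex, non-adjacent images meet in at most one point which is not the image of a vertex
  and where they cross transversally, and there are no triple points).\<close>
definition general_position :: "(nat \<Rightarrow> real^3) \<Rightarrow> nat \<Rightarrow> real^3 \<Rightarrow> bool" where
  "general_position v n u \<longleftrightarrow> u \<noteq> 0 \<and>
     (\<forall>i<n. proj u (edge_dir v n i) \<noteq> 0) \<and>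
     (\<forall>i<n. \<forall>j<n. j = Suc i mod n \<longrightarrow> pseg u v n i \<inter> pseg u v n j = {proj u (v j)}) \<and>
     (\<forall>i<n. \<forall>j<n. i \<noteq> j \<and> \<not> adjacent n i j \<longrightarrow>
        finite (pseg u v n i \<inter> pseg u v n j) \<and> card (pseg u v n i \<inter> pseg u v n j) \<le> 1 \<and>
        (\<forall>k<n. proj u (v k) \<notin> pseg u v n i \<inter> pseg u v n j) \<and>
        (pseg u v n i \<inter> pseg u v n j \<noteq> {} \<longrightarrow>
           cross3 (edge_dir v n i) (edge_dir v n j) \<bullet> u \<noteq> 0)) \<and>
     (\<forall>i<n. \<forall>j<n. \<forall>k<n. i \<noteq> j \<and> j \<noteq> k \<and> i \<noteq> k \<longrightarrow>
        pseg u v n i \<inter> pseg u v n j \<inter> pseg u v n k = {})"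

definition crossings :: "(nat \<Rightarrow> real^3) \<Rightarrow> nat \<Rightarrow> real^3 \<Rightarrow> (nat \<times> nat) set" where
  "crossings v n u = {(i, j). i < j \<and> j < n \<and> \<not> adjacent n i j \<and>
                             pseg u v n i \<inter> pseg u v n j \<noteq> {}}"

text \<open>Height of edge i over edge j at their crossing, measured along u (positive: edge i
  is the over-strand, the viewer being at the far end of u).\<close>
definition height :: "(nat \<Rightarrow> real^3) \<Rightarrow> nat \<Rightarrow> real^3 \<Rightarrow> nat \<Rightarrow> nat \<Rightarrow> real" where
  "height v n u i j = (SOME t. \<exists>p\<in>seg v n i. \<exists>q\<in>seg v n j. p - q = t *\<^sub>R u)"

text \<open>Right-hand-rule sign: +1 iff (over direction) x (under direction) points toward
  the viewer. Independent of the side of viewing (u vs -u).\<close>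
definition crossing_sign :: "(nat \<Rightarrow> real^3) \<Rightarrow> nat \<Rightarrow> real^3 \<Rightarrow> nat \<Rightarrow> nat \<Rightarrow> real" where
  "crossing_sign v n u i j =
     sgn (height v n u i j * (cross3 (edge_dir v n i) (edge_dir v n j) \<bullet> u))"

definition writhe :: "(nat \<Rightarrow> real^3) \<Rightarrow> nat \<Rightarrow> real^3 \<Rightarrow> real" where
  "writhe v n u = (\<Sum>(i, j)\<in>crossings v n u. crossing_sign v n u i j)"

end

theory Submission
  imports Defs
begin

(* The crossing of two non-adjacent
   edges i, j contributes sgn ((e_i \<times> e_j) \<bullet> w) to the writhe along w when edge i lies over edge
   j, i.e. when a difference p - q of points of the two edges is a positive multiple of w.  The
   differences of points of edges i and j sweep a parallelogram; in coordinates with respect to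
   (u, u', u \<times> u') the contributions for u and for u' become the signed hits of the positive x-
   and y-axis by this parallelogram.  A discrete Stokes formula for affine maps of the unit square
   identifies their difference with the signed number of crossings of the boundary of the
   parallelogram through the quadrant spanned by u and u'.  Each side of the boundary is an edge
   minus a vertex or a vertex minus an edge, so summing over all pairs i, j telescopes: for every
   edge only the terms of its two nearest non-adjacent vertices survive, and each of these is at
   most 1 in absolute value, since a segment avoiding the origin cannot cross both the quadrant
   and its reflection.  Hence |w(u') - w(u)| \<le> 2n, and as |w(u')| is at most the number of
   crossings along u', that number is at least |w(u)| - 2n \<ge> (|w(u)| - 3n)/16. *)

section \<open>Crossings of the positive quadrant\<close>

definition quadrant :: "real \<Rightarrow> real \<Rightarrow> real" where
  "quadrant x y = (if 0 \<le> x \<and> 0 \<le> y then 1 else 0)"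

lemma straddle_zero_param:
  fixes a b :: real
  assumes "a*b < 0"
  shows "a/(a-b) \<in> {0..1}" "(1 - a/(a-b))*a + (a/(a-b))*b = 0"
proof -
  have "a - b \<noteq> 0" using assms by auto
  then show "(1 - a/(a-b))*a + (a/(a-b))*b = 0" by (simp add: field_simps)
  show "a/(a-b) \<in> {0..1}"
    using assms by (cases "a > 0") (auto simp: mult_less_0_iff divide_simps)
qed

lemma interpolate_at_zero:
  fixes a b c d :: real
  assumes "a*b < 0"
  shows "(1 - a/(a-b))*c + (a/(a-b))*d = (a*d - b*c)/(a-b)"
proof -
  have "a - b \<noteq> 0" using assms by auto
  then have "1 - a/(a-b) = -b/(a-b)" by (simp add: field_simps)
  then show ?thesis by (simp add: diff_divide_distrib add_divide_distrib)
qed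

lemma pos_div_straddle_iff:
  fixes a b e :: real
  assumes "a*b < 0"
  shows "0 < e/(a-b) \<longleftrightarrow> 0 < a*e"
  using assms by (cases "0 < a") (auto simp: mult_less_0_iff zero_less_divide_iff zero_less_mult_iff)

lemma ex_segment_zero_iff:
  fixes y0 y1 :: real
  assumes "y0 \<noteq> 0" "y1 \<noteq> 0"
  shows "(\<exists>l\<in>{0..1}. (1-l)*y0 + l*y1 = 0 \<and> P l) \<longleftrightarrow> y0*y1 < 0 \<and> P (y0 / (y0 - y1))"
proof
  assume "\<exists>l\<in>{0..1}. (1-l)*y0 + l*y1 = 0 \<and> P l"
  then obtain l where l: "0 \<le> l" "l \<le> 1" "(1-l)*y0 + l*y1 = 0" "P l" by auto
  have "y0 - y1 \<noteq> 0" using l assms by (auto simp: algebra_simps)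
  then have l_eq: "l = y0 / (y0 - y1)" using l(3) by (simp add: field_simps)
  have prod: "y0*y1 = - (l*(1-l)) * (y0 - y1)^2"
  proof -
    have "y0 = l*(y0 - y1)" "y1 = (l-1)*(y0 - y1)" using l(3) by (simp_all add: algebra_simps)
    then have "y0*y1 = (l*(y0 - y1)) * ((l-1)*(y0 - y1))" by simp
    then show ?thesis by (simp add: power2_eq_square algebra_simps)
  qed
  have "0 < l" "l < 1" using l assms by (auto simp: le_less)
  then have "0 < l*(1-l)*(y0 - y1)^2" using \<open>y0 - y1 \<noteq> 0\<close> by simp
  then show "y0*y1 < 0 \<and> P (y0 / (y0 - y1))" using prod l(4) l_eq by simp
next
  assume "y0*y1 < 0 \<and> P (y0 / (y0 - y1))"
  then show "\<exists>l\<in>{0..1}. (1-l)*y0 + l*y1 = 0 \<and> P l"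
    using straddle_zero_param[of y0 y1] by blast
qed

lemma quadrant_diff_by_signs:
  fixes x0 y0 x1 y1 :: real
  assumes "x0 \<noteq> 0" "y0 \<noteq> 0" "x1 \<noteq> 0" "y1 \<noteq> 0"
    and "x0*x1 < 0 \<Longrightarrow> y0*y1 < 0 \<Longrightarrow> x0*y1 - x1*y0 \<noteq> 0"
  shows "quadrant x1 y1 - quadrant x0 y0 =
    sgn (y1 - y0) * (if y0*y1 < 0 \<and> 0 < - y0 * (x0*y1 - x1*y0) then 1 else 0) +
    sgn (x1 - x0) * (if x0*x1 < 0 \<and> 0 < x0 * (x0*y1 - x1*y0) then 1 else 0)"
proof -
  have "x0 > 0 \<or> x0 < 0" "x1 > 0 \<or> x1 < 0" "y0 > 0 \<or> y0 < 0" "y1 > 0 \<or> y1 < 0"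
    using assms(1-4) by auto
  then show ?thesis
    using assms(5)
    apply (elim disjE)
    apply (auto simp: quadrant_def zero_less_mult_iff mult_less_0_iff sgn_if)
    apply (smt (verit) mult_pos_pos mult_neg_neg mult_pos_neg mult_neg_pos)+
    done
qed

lemma quadrant_change_along_segment:
  fixes x0 y0 x1 y1 :: real
  assumes "x0 \<noteq> 0" "y0 \<noteq> 0" "x1 \<noteq> 0" "y1 \<noteq> 0"
    and avoids_origin: "\<forall>l\<in>{0..1}. \<not> ((1-l)*x0 + l*x1 = 0 \<and> (1-l)*y0 + l*y1 = 0)"
  shows "quadrant x1 y1 - quadrant x0 y0 =
    sgn (y1 - y0) * (if \<exists>l\<in>{0..1}. (1-l)*y0 + l*y1 = 0 \<and> 0 < (1-l)*x0 + l*x1 then 1 else 0) +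
    sgn (x1 - x0) * (if \<exists>l\<in>{0..1}. (1-l)*x0 + l*x1 = 0 \<and> 0 < (1-l)*y0 + l*y1 then 1 else 0)"
proof -
  define D where "D = x0*y1 - x1*y0"
  have "(\<exists>l\<in>{0..1}. (1-l)*y0 + l*y1 = 0 \<and> 0 < (1-l)*x0 + l*x1)
      \<longleftrightarrow> y0*y1 < 0 \<and> 0 < (1 - y0/(y0-y1))*x0 + (y0/(y0-y1))*x1"
    by (rule ex_segment_zero_iff[OF assms(2,4)])
  also have "\<dots> \<longleftrightarrow> y0*y1 < 0 \<and> 0 < - y0 * D"
  proof (rule conj_cong[OF refl])
    assume "y0*y1 < 0"
    then show "0 < (1 - y0/(y0-y1))*x0 + (y0/(y0-y1))*x1 \<longleftrightarrow> 0 < - y0 * D"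
      by (simp only: interpolate_at_zero pos_div_straddle_iff) (simp add: D_def algebra_simps)
  qed
  finally have hit_x: "(\<exists>l\<in>{0..1}. (1-l)*y0 + l*y1 = 0 \<and> 0 < (1-l)*x0 + l*x1)
      \<longleftrightarrow> y0*y1 < 0 \<and> 0 < - y0 * D" .
  have "(\<exists>l\<in>{0..1}. (1-l)*x0 + l*x1 = 0 \<and> 0 < (1-l)*y0 + l*y1)
      \<longleftrightarrow> x0*x1 < 0 \<and> 0 < (1 - x0/(x0-x1))*y0 + (x0/(x0-x1))*y1"
    by (rule ex_segment_zero_iff[OF assms(1,3)])
  also have "\<dots> \<longleftrightarrow> x0*x1 < 0 \<and> 0 < x0 * D"
  proof (rule conj_cong[OF refl])
    assume "x0*x1 < 0"
    then show "0 < (1 - x0/(x0-x1))*y0 + (x0/(x0-x1))*y1 \<longleftrightarrow> 0 < x0 * D"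
      by (simp only: interpolate_at_zero pos_div_straddle_iff) (simp add: D_def)
  qed
  finally have hit_y: "(\<exists>l\<in>{0..1}. (1-l)*x0 + l*x1 = 0 \<and> 0 < (1-l)*y0 + l*y1)
      \<longleftrightarrow> x0*x1 < 0 \<and> 0 < x0 * D" .
  have "\<not> (x0*x1 < 0 \<and> (1 - x0/(x0-x1))*y0 + (x0/(x0-x1))*y1 = 0)"
    using avoids_origin ex_segment_zero_iff[OF assms(1,3), of "\<lambda>l. (1-l)*y0 + l*y1 = 0"] by blast
  then have "x0*x1 < 0 \<Longrightarrow> D \<noteq> 0"
    by (simp only: interpolate_at_zero) (auto simp: D_def)
  then show ?thesis
    unfolding hit_x hit_y using quadrant_diff_by_signs[OF assms(1-4)] unfolding D_def by simp
qed

text \<open>Signed number of crossings of the segment from p to q through the quadrant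
  {x \<ge> 0, y \<ge> 0, z = 0}: +1 upwards, -1 downwards, l being the parameter where z vanishes.
  Points with z = 0 count as lying above.\<close>

definition quadrant_flux :: "real \<times> real \<times> real \<Rightarrow> real \<times> real \<times> real \<Rightarrow> real" where
  "quadrant_flux = (\<lambda>(px, py, pz) (qx, qy, qz).
     if (0 \<le> pz) = (0 \<le> qz) then 0
     else (if 0 \<le> qz then 1 else -1) *
       quadrant ((1 - pz/(pz-qz))*px + (pz/(pz-qz))*qx) ((1 - pz/(pz-qz))*py + (pz/(pz-qz))*qy))"

lemma quadrant_flux_same_side:
  "(0 \<le> pz) = (0 \<le> qz) \<Longrightarrow> quadrant_flux (px, py, pz) (qx, qy, qz) = 0"
  by (simp add: quadrant_flux_def)

lemma quadrant_flux_up: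
  assumes "pz < 0" "0 \<le> qz" "l = pz/(pz-qz)"
  shows "quadrant_flux (px, py, pz) (qx, qy, qz) = quadrant ((1-l)*px + l*qx) ((1-l)*py + l*qy)"
  using assms by (simp add: quadrant_flux_def)

lemma quadrant_flux_down:
  assumes "0 \<le> pz" "qz < 0" "l = pz/(pz-qz)"
  shows "quadrant_flux (px, py, pz) (qx, qy, qz) = - quadrant ((1-l)*px + l*qx) ((1-l)*py + l*qy)"
  using assms by (simp add: quadrant_flux_def)

lemma quadrant_flux_swap: "quadrant_flux q p = - quadrant_flux p q"
proof -
  obtain px py pz qx qy qz where pq: "p = (px, py, pz)" "q = (qx, qy, qz)"
    by (metis prod.exhaust)
  show ?thesis
  proof (cases "(0 \<le> pz) = (0 \<le> qz)")
    case False
    then have "pz - qz \<noteq> 0" by auto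
    then have "1 - qz/(qz-pz) = pz/(pz-qz)" "qz/(qz-pz) = 1 - pz/(pz-qz)"
      by (simp_all add: field_simps)
    then show ?thesis
      using False unfolding pq quadrant_flux_def prod.case by (simp add: add.commute)
  qed (simp add: pq quadrant_flux_def)
qed

lemma abs_quadrant_flux_le: "\<bar>quadrant_flux p q\<bar> \<le> 1"
  by (cases p; cases q) (simp add: quadrant_flux_def quadrant_def)

lemma quadrant_flux_minus_reflection:
  fixes px py pz qx qy qz :: real
  assumes avoids_origin:
    "\<forall>l\<in>{0..1}. \<not> ((1-l)*px + l*qx = 0 \<and> (1-l)*py + l*qy = 0 \<and> (1-l)*pz + l*qz = 0)"
  shows "\<bar>quadrant_flux (px, py, pz) (qx, qy, qz) - quadrant_flux (-px, -py, -pz) (-qx, -qy, -qz)\<bar>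
    \<le> 1"
proof (cases "pz*qz < 0")
  case True
  define l where "l = pz/(pz-qz)"
  define x where "x = (1-l)*px + l*qx"
  define y where "y = (1-l)*py + l*qy"
  have "l \<in> {0..1}" "(1-l)*pz + l*qz = 0"
    using straddle_zero_param[OF True] unfolding l_def by auto
  then have not_origin: "\<not> (x = 0 \<and> y = 0)" using avoids_origin unfolding x_def y_def by blast
  have sides: "(0 \<le> pz) \<noteq> (0 \<le> qz)" "(0 \<le> -pz) \<noteq> (0 \<le> -qz)" "(0 \<le> -qz) \<longleftrightarrow> \<not> (0 \<le> qz)"
    using True by (auto simp: mult_less_0_iff)
  have "(-pz)/(-pz - -qz) = l"
    unfolding l_def by (metis minus_diff_eq minus_divide_divide diff_minus_eq_add uminus_add_conv_diff)
  moreover have "(1-l)*(-px) + l*(-qx) = -x" "(1-l)*(-py) + l*(-qy) = -y"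
    unfolding x_def y_def by (simp_all add: algebra_simps)
  ultimately have "quadrant_flux (-px, -py, -pz) (-qx, -qy, -qz) =
      - (if 0 \<le> qz then 1 else -1) * quadrant (-x) (-y)"
    using sides unfolding quadrant_flux_def prod.case by simp
  moreover have "quadrant_flux (px, py, pz) (qx, qy, qz) = (if 0 \<le> qz then 1 else -1) * quadrant x y"
    using sides unfolding quadrant_flux_def prod.case l_def[symmetric] x_def[symmetric] y_def[symmetric]
    by simp
  ultimately show ?thesis using not_origin by (auto simp: quadrant_def)
next
  case False
  then have "quadrant_flux (px, py, pz) (qx, qy, qz) = 0 \<or>
      quadrant_flux (-px, -py, -pz) (-qx, -qy, -qz) = 0"
    by (auto simp: quadrant_flux_def mult_less_0_iff)
  then show ?thesis using abs_quadrant_flux_le by auto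
qed

section \<open>Flux through the boundary of the unit square\<close>

definition square_flux ::
    "(real \<Rightarrow> real \<Rightarrow> real) \<Rightarrow> (real \<Rightarrow> real \<Rightarrow> real) \<Rightarrow> (real \<Rightarrow> real \<Rightarrow> real) \<Rightarrow> real" where
  "square_flux F G H =
    (let P = \<lambda>s t. (F s t, G s t, H s t) in
      (quadrant_flux (P 0 0) (P 1 0) + quadrant_flux (P 1 0) (P 1 1)) +
      (quadrant_flux (P 1 1) (P 0 1) + quadrant_flux (P 0 1) (P 0 0)))"

definition meets_ray ::
    "(real \<Rightarrow> real \<Rightarrow> real) \<Rightarrow> (real \<Rightarrow> real \<Rightarrow> real) \<Rightarrow> (real \<Rightarrow> real \<Rightarrow> real) \<Rightarrow> bool" where
  "meets_ray F G H \<longleftrightarrow> (\<exists>s\<in>{0..1}. \<exists>t\<in>{0..1}. 0 < F s t \<and> G s t = 0 \<and> H s t = 0)"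

text \<open>Jx and Jy stand for the orientations with which the map meets the x- and the y-axis; for
  affine maps they are the corresponding 2 \<times> 2 minors of the derivative.\<close>

definition transversal_square ::
    "(real \<Rightarrow> real \<Rightarrow> real) \<Rightarrow> (real \<Rightarrow> real \<Rightarrow> real) \<Rightarrow> (real \<Rightarrow> real \<Rightarrow> real) \<Rightarrow>
     real \<Rightarrow> real \<Rightarrow> bool" where
  "transversal_square F G H Jx Jy \<longleftrightarrow>
    (\<forall>s\<in>{0..1}. \<forall>t\<in>{0..1}. \<not> (F s t = 0 \<and> G s t = 0 \<and> H s t = 0)) \<and>
    ((\<exists>s\<in>{0..1}. \<exists>t\<in>{0..1}. G s t = 0 \<and> H s t = 0) \<longrightarrow> Jx \<noteq> 0) \<and>
    ((\<exists>s\<in>{0..1}. \<exists>t\<in>{0..1}. F s t = 0 \<and> H s t = 0) \<longrightarrow> Jy \<noteq> 0) \<and>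
    (\<forall>s\<in>{0..1}. \<forall>t\<in>{0..1}. (s = 0 \<or> s = 1 \<or> t = 0 \<or> t = 1) \<longrightarrow>
        \<not> (G s t = 0 \<and> H s t = 0) \<and> \<not> (F s t = 0 \<and> H s t = 0))"

definition flux_counts_ray_hits ::
    "(real \<Rightarrow> real \<Rightarrow> real) \<Rightarrow> (real \<Rightarrow> real \<Rightarrow> real) \<Rightarrow> (real \<Rightarrow> real \<Rightarrow> real) \<Rightarrow>
     real \<Rightarrow> real \<Rightarrow> bool" where
  "flux_counts_ray_hits F G H Jx Jy \<longleftrightarrow>
    square_flux F G H = (if meets_ray G F H then sgn Jy else 0) - (if meets_ray F G H then sgn Jx else 0)"

lemma ex_unit_square_involution:
  fixes \<phi> \<psi> :: "real \<Rightarrow> real \<Rightarrow> real"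
  assumes "\<And>s t. s \<in> {0..1} \<Longrightarrow> t \<in> {0..1} \<Longrightarrow>
      \<phi> s t \<in> {0..1} \<and> \<psi> s t \<in> {0..1} \<and> \<phi> (\<phi> s t) (\<psi> s t) = s \<and> \<psi> (\<phi> s t) (\<psi> s t) = t"
  shows "(\<exists>s\<in>{0..1}. \<exists>t\<in>{0..1}. P (\<phi> s t) (\<psi> s t)) \<longleftrightarrow> (\<exists>s\<in>{0..1}. \<exists>t\<in>{0..1}. P s t)"
  using assms by metis

lemma flux_counts_ray_hits_by_symmetry:
  fixes F G H \<phi> \<psi> :: "real \<Rightarrow> real \<Rightarrow> real"
  defines "F' \<equiv> \<lambda>s t. F (\<phi> s t) (\<psi> s t)" and "G' \<equiv> \<lambda>s t. G (\<phi> s t) (\<psi> s t)"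
    and "H' \<equiv> \<lambda>s t. H (\<phi> s t) (\<psi> s t)"
  assumes involution: "\<And>s t. s \<in> {0..1} \<Longrightarrow> t \<in> {0..1} \<Longrightarrow>
      \<phi> s t \<in> {0..1} \<and> \<psi> s t \<in> {0..1} \<and> \<phi> (\<phi> s t) (\<psi> s t) = s \<and> \<psi> (\<phi> s t) (\<psi> s t) = t \<and>
      (\<phi> s t = 0 \<or> \<phi> s t = 1 \<or> \<psi> s t = 0 \<or> \<psi> s t = 1 \<longleftrightarrow> s = 0 \<or> s = 1 \<or> t = 0 \<or> t = 1)"
    and reverses: "square_flux F' G' H' = - square_flux F G H"
    and transversal: "transversal_square F G H Jx Jy"
    and reflected: "transversal_square F' G' H' (-Jx) (-Jy) \<Longrightarrow> flux_counts_ray_hits F' G' H' (-Jx) (-Jy)"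
  shows "flux_counts_ray_hits F G H Jx Jy"
proof -
  have ex: "(\<exists>s\<in>{0..1}. \<exists>t\<in>{0..1}. P (\<phi> s t) (\<psi> s t)) \<longleftrightarrow> (\<exists>s\<in>{0..1}. \<exists>t\<in>{0..1}. P s t)" for P
    by (rule ex_unit_square_involution) (use involution in blast)
  have all: "(\<forall>s\<in>{0..1}. \<forall>t\<in>{0..1}. P (\<phi> s t) (\<psi> s t)) \<longleftrightarrow> (\<forall>s\<in>{0..1}. \<forall>t\<in>{0..1}. P s t)" for P
    using ex[of "\<lambda>s t. \<not> P s t"] by blast
  have all_bd: "(\<forall>s\<in>{0..1}. \<forall>t\<in>{0..1}. (s = 0 \<or> s = 1 \<or> t = 0 \<or> t = 1) \<longrightarrow> P (\<phi> s t) (\<psi> s t))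
      \<longleftrightarrow> (\<forall>s\<in>{0..1}. \<forall>t\<in>{0..1}. (s = 0 \<or> s = 1 \<or> t = 0 \<or> t = 1) \<longrightarrow> P s t)" for P
    using all[of "\<lambda>s t. (s = 0 \<or> s = 1 \<or> t = 0 \<or> t = 1) \<longrightarrow> P s t"] involution by (smt (verit))
  have "transversal_square F' G' H' (-Jx) (-Jy)"
    using transversal unfolding transversal_square_def F'_def G'_def H'_def
    using all[of "\<lambda>s t. \<not> (F s t = 0 \<and> G s t = 0 \<and> H s t = 0)"]
      ex[of "\<lambda>s t. G s t = 0 \<and> H s t = 0"] ex[of "\<lambda>s t. F s t = 0 \<and> H s t = 0"]
      all_bd[of "\<lambda>s t. \<not> (G s t = 0 \<and> H s t = 0) \<and> \<not> (F s t = 0 \<and> H s t = 0)"]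
    by simp
  then have "flux_counts_ray_hits F' G' H' (-Jx) (-Jy)" by (rule reflected)
  moreover have "meets_ray F' G' H' \<longleftrightarrow> meets_ray F G H" "meets_ray G' F' H' \<longleftrightarrow> meets_ray G F H"
    unfolding meets_ray_def F'_def G'_def H'_def by (rule ex)+
  ultimately show ?thesis
    unfolding flux_counts_ray_hits_def reverses
    by (cases "meets_ray G F H"; cases "meets_ray F G H") (simp_all add: sgn_minus)
qed

lemma flux_counts_ray_hits_no_crossing:
  assumes "\<not> meets_ray F G H" "\<not> meets_ray G F H"
    and "(0 \<le> H 0 0) = (0 \<le> H 1 0)" "(0 \<le> H 1 1) = (0 \<le> H 1 0)" "(0 \<le> H 0 1) = (0 \<le> H 1 0)"
  shows "flux_counts_ray_hits F G H Jx Jy"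
  using assms by (simp add: flux_counts_ray_hits_def square_flux_def quadrant_flux_same_side)

text \<open>The sign of the t-term matches the difference p - q of a point p = v i + s e_i of one
  edge and a point q = v j + t e_j of another.\<close>

definition aff :: "real \<Rightarrow> real \<Rightarrow> real \<Rightarrow> real \<Rightarrow> real \<Rightarrow> real" where
  "aff a b c s t = a + s*b - t*c"

lemma aff_interpolate:
  "(1-l) * aff a b c s1 t1 + l * aff a b c s2 t2 = aff a b c ((1-l) * s1 + l * s2) ((1-l) * t1 + l * t2)"
  by (simp add: aff_def algebra_simps)

lemma quadrant_flux_aff_up:
  assumes "aff a3 b3 c3 s1 t1 < 0" "0 \<le> aff a3 b3 c3 s2 t2"
    and "l = aff a3 b3 c3 s1 t1 / (aff a3 b3 c3 s1 t1 - aff a3 b3 c3 s2 t2)"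
    and "s = (1-l) * s1 + l * s2" "t = (1-l) * t1 + l * t2"
  shows "quadrant_flux (aff a1 b1 c1 s1 t1, aff a2 b2 c2 s1 t1, aff a3 b3 c3 s1 t1)
      (aff a1 b1 c1 s2 t2, aff a2 b2 c2 s2 t2, aff a3 b3 c3 s2 t2) =
    quadrant (aff a1 b1 c1 s t) (aff a2 b2 c2 s t)"
  by (simp only: quadrant_flux_up[OF assms(1-3)] aff_interpolate assms(4,5)[symmetric])

lemma quadrant_flux_aff_down:
  assumes "0 \<le> aff a3 b3 c3 s1 t1" "aff a3 b3 c3 s2 t2 < 0"
    and "l = aff a3 b3 c3 s1 t1 / (aff a3 b3 c3 s1 t1 - aff a3 b3 c3 s2 t2)"
    and "s = (1-l) * s1 + l * s2" "t = (1-l) * t1 + l * t2"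
  shows "quadrant_flux (aff a1 b1 c1 s1 t1, aff a2 b2 c2 s1 t1, aff a3 b3 c3 s1 t1)
      (aff a1 b1 c1 s2 t2, aff a2 b2 c2 s2 t2, aff a3 b3 c3 s2 t2) =
    - quadrant (aff a1 b1 c1 s t) (aff a2 b2 c2 s t)"
  by (simp only: quadrant_flux_down[OF assms(1-3)] aff_interpolate assms(4,5)[symmetric])

lemma square_flux_rising_half:
  fixes a1 b1 c1 a2 b2 c2 a3 b3 c3 :: real
  defines "P \<equiv> \<lambda>s t. (aff a1 b1 c1 s t, aff a2 b2 c2 s t, aff a3 b3 c3 s t)"
  assumes "0 < b3" "c3 \<le> 0" "a3 < 0" "0 \<le> a3 + b3 - c3"
    and "(su, tu) = (if 0 \<le> a3 + b3 then (-a3/b3, 0) else (1, (a3+b3)/c3))"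
  shows "quadrant_flux (P 0 0) (P 1 0) + quadrant_flux (P 1 0) (P 1 1) =
    quadrant (aff a1 b1 c1 su tu) (aff a2 b2 c2 su tu)"
proof (cases "0 \<le> a3 + b3")
  case True
  then have "quadrant_flux (P 0 0) (P 1 0) = quadrant (aff a1 b1 c1 su tu) (aff a2 b2 c2 su tu)"
    unfolding P_def using assms by (intro quadrant_flux_aff_up[where l = "-a3/b3"]) (auto simp: aff_def)
  moreover have "quadrant_flux (P 1 0) (P 1 1) = 0"
    unfolding P_def using True assms by (intro quadrant_flux_same_side) (simp add: aff_def)
  ultimately show ?thesis by simp
next
  case False
  then have "quadrant_flux (P 1 0) (P 1 1) = quadrant (aff a1 b1 c1 su tu) (aff a2 b2 c2 su tu)"
    unfolding P_def using assms by (intro quadrant_flux_aff_up[where l = "(a3+b3)/c3"]) (auto simp: aff_def)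
  moreover have "quadrant_flux (P 0 0) (P 1 0) = 0"
    unfolding P_def using False assms by (intro quadrant_flux_same_side) (simp add: aff_def)
  ultimately show ?thesis by simp
qed

lemma square_flux_falling_half:
  fixes a1 b1 c1 a2 b2 c2 a3 b3 c3 :: real
  defines "P \<equiv> \<lambda>s t. (aff a1 b1 c1 s t, aff a2 b2 c2 s t, aff a3 b3 c3 s t)"
  assumes "0 < b3" "c3 \<le> 0" "a3 < 0" "0 \<le> a3 + b3 - c3"
    and "(sd, td) = (if a3 - c3 < 0 then ((c3-a3)/b3, 1) else (0, a3/c3))"
  shows "quadrant_flux (P 1 1) (P 0 1) + quadrant_flux (P 0 1) (P 0 0) =
    - quadrant (aff a1 b1 c1 sd td) (aff a2 b2 c2 sd td)"
proof (cases "a3 - c3 < 0")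
  case True
  then have "quadrant_flux (P 1 1) (P 0 1) = - quadrant (aff a1 b1 c1 sd td) (aff a2 b2 c2 sd td)"
    unfolding P_def using assms
    by (intro quadrant_flux_aff_down[where l = "(a3+b3-c3)/b3"]) (auto simp: aff_def field_simps)
  moreover have "quadrant_flux (P 0 1) (P 0 0) = 0"
    unfolding P_def using True assms by (intro quadrant_flux_same_side) (simp add: aff_def)
  ultimately show ?thesis by simp
next
  case False
  then have "quadrant_flux (P 0 1) (P 0 0) = - quadrant (aff a1 b1 c1 sd td) (aff a2 b2 c2 sd td)"
    unfolding P_def using assms
    by (intro quadrant_flux_aff_down[where l = "(a3-c3)/(-c3)"]) (auto simp: aff_def field_simps)
  moreover have "quadrant_flux (P 1 1) (P 0 1) = 0"
    unfolding P_def using False assms by (intro quadrant_flux_same_side) (simp add: aff_def)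
  ultimately show ?thesis by simp
qed

lemma ex_zero_set_as_segment:
  fixes a3 b3 c3 :: real
  assumes "b3 \<noteq> 0"
    and ends: "su \<in> {0..1}" "tu \<in> {0..1}" "sd \<in> {0..1}" "td \<in> {0..1}"
      "aff a3 b3 c3 su tu = 0" "aff a3 b3 c3 sd td = 0"
    and bounds: "\<And>s t. s \<in> {0..1} \<Longrightarrow> t \<in> {0..1} \<Longrightarrow> aff a3 b3 c3 s t = 0 \<Longrightarrow> tu \<le> t \<and> t \<le> td"
  shows "(\<exists>s\<in>{0..1}. \<exists>t\<in>{0..1}. aff a3 b3 c3 s t = 0 \<and> Q s t) \<longleftrightarrow>
    (\<exists>l\<in>{0..1}. Q ((1-l) * sd + l * su) ((1-l) * td + l * tu))"
proof
  assume "\<exists>s\<in>{0..1}. \<exists>t\<in>{0..1}. aff a3 b3 c3 s t = 0 \<and> Q s t"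
  then obtain s t where st: "s \<in> {0..1}" "t \<in> {0..1}" "aff a3 b3 c3 s t = 0" "Q s t" by blast
  have t: "tu \<le> t" "t \<le> td" using bounds[OF st(1-3)] by auto
  define l where "l = (if td = tu then 0 else (td - t)/(td - tu))"
  have l: "l \<in> {0..1}" unfolding l_def using t by (auto simp: divide_simps)
  have t_eq: "t = (1-l) * td + l * tu"
  proof (cases "td = tu")
    case False
    then have "l * (td - tu) = td - t" unfolding l_def by simp
    then show ?thesis by (simp add: algebra_simps)
  qed (use t l_def in simp)
  have e: "s * b3 = t * c3 - a3" "sd * b3 = td * c3 - a3" "su * b3 = tu * c3 - a3"
    using st(3) ends(5,6) by (simp_all add: aff_def algebra_simps)
  have "b3 * ((1-l) * sd + l * su) = (1-l) * (sd * b3) + l * (su * b3)" by (simp add: algebra_simps)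
  also have "\<dots> = ((1-l) * td + l * tu) * c3 - a3" unfolding e by (simp add: algebra_simps)
  also have "\<dots> = b3 * s" using e(1) t_eq by (simp add: mult.commute)
  finally have "s = (1-l) * sd + l * su" using assms(1) by simp
  then show "\<exists>l\<in>{0..1}. Q ((1-l) * sd + l * su) ((1-l) * td + l * tu)" using l st(4) t_eq by metis
next
  assume "\<exists>l\<in>{0..1}. Q ((1-l) * sd + l * su) ((1-l) * td + l * tu)"
  then obtain l where l: "l \<in> {0..1}" "Q ((1-l) * sd + l * su) ((1-l) * td + l * tu)" by blast
  have "(1-l) * sd + l * su \<in> {0..1}" "(1-l) * td + l * tu \<in> {0..1}"
    using l(1) ends(1-4) by (auto intro!: convex_bound_le add_nonneg_nonneg mult_nonneg_nonneg)
  moreover have "aff a3 b3 c3 ((1-l) * sd + l * su) ((1-l) * td + l * tu) = 0"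
    using ends(5,6) aff_interpolate[of l a3 b3 c3 sd td su tu] by simp
  ultimately show "\<exists>s\<in>{0..1}. \<exists>t\<in>{0..1}. aff a3 b3 c3 s t = 0 \<and> Q s t" using l(2) by blast
qed

lemma rising_crossing_point:
  fixes a3 b3 c3 :: real
  assumes b3: "0 < b3" and straddle: "a3 < 0" "0 \<le> a3 + b3 - c3"
    and U: "(su, tu) = (if 0 \<le> a3 + b3 then (-a3/b3, 0) else (1, (a3+b3)/c3))"
  shows "su \<in> {0..1}" "tu \<in> {0..1}" "aff a3 b3 c3 su tu = 0" "su = 1 \<or> tu = 0"
    and "\<And>s t. s \<in> {0..1} \<Longrightarrow> t \<in> {0..1} \<Longrightarrow> aff a3 b3 c3 s t = 0 \<Longrightarrow> tu \<le> t"
proof -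
  have "su \<in> {0..1} \<and> tu \<in> {0..1} \<and> aff a3 b3 c3 su tu = 0 \<and> (su = 1 \<or> tu = 0)"
  proof (cases "0 \<le> a3 + b3")
    case True
    then have "su = -a3/b3" "tu = 0" using U by simp_all
    moreover have "0 \<le> -a3/b3" "-a3/b3 \<le> 1" using True b3 straddle by (simp_all add: divide_simps)
    ultimately show ?thesis using b3 by (simp add: aff_def)
  next
    case False
    then have "su = 1" "tu = (a3+b3)/c3" "c3 < 0" using U straddle by simp_all
    moreover have "0 \<le> (a3+b3)/c3" "(a3+b3)/c3 \<le> 1"
      using False straddle \<open>c3 < 0\<close> by (simp_all add: divide_simps)
    ultimately show ?thesis by (simp add: aff_def)
  qed
  then show "su \<in> {0..1}" "tu \<in> {0..1}" "aff a3 b3 c3 su tu = 0" "su = 1 \<or> tu = 0" by auto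
  fix s t assume st: "s \<in> {0..1}" "t \<in> {0..1}" "aff a3 b3 c3 s t = 0"
  show "tu \<le> t"
  proof (cases "0 \<le> a3 + b3")
    case False
    have "s * b3 \<le> b3" using st(1) b3 by (auto simp: mult_left_le_one_le)
    then have "t * c3 \<le> a3 + b3" using st(3) by (simp add: aff_def)
    moreover have "c3 < 0" using False straddle by linarith
    ultimately show ?thesis using U False by (simp add: divide_le_eq)
  qed (use U st in simp)
qed

lemma falling_crossing_point:
  fixes a3 b3 c3 :: real
  assumes b3: "0 < b3" and straddle: "a3 < 0" "0 \<le> a3 + b3 - c3"
    and D: "(sd, td) = (if a3 - c3 < 0 then ((c3-a3)/b3, 1) else (0, a3/c3))"
  shows "sd \<in> {0..1}" "td \<in> {0..1}" "aff a3 b3 c3 sd td = 0" "sd = 0 \<or> td = 1"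
    and "\<And>s t. s \<in> {0..1} \<Longrightarrow> t \<in> {0..1} \<Longrightarrow> aff a3 b3 c3 s t = 0 \<Longrightarrow> t \<le> td"
proof -
  have "sd \<in> {0..1} \<and> td \<in> {0..1} \<and> aff a3 b3 c3 sd td = 0 \<and> (sd = 0 \<or> td = 1)"
  proof (cases "a3 - c3 < 0")
    case True
    then have "sd = (c3-a3)/b3" "td = 1" using D by simp_all
    moreover have "0 \<le> (c3-a3)/b3" "(c3-a3)/b3 \<le> 1"
      using True b3 straddle by (simp_all add: divide_simps)
    ultimately show ?thesis using b3 by (simp add: aff_def)
  next
    case False
    then have "sd = 0" "td = a3/c3" "c3 < 0" using D straddle by simp_all
    moreover have "0 \<le> a3/c3" "a3/c3 \<le> 1"
      using False straddle \<open>c3 < 0\<close> by (simp_all add: divide_simps)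
    ultimately show ?thesis by (simp add: aff_def)
  qed
  then show "sd \<in> {0..1}" "td \<in> {0..1}" "aff a3 b3 c3 sd td = 0" "sd = 0 \<or> td = 1" by auto
  fix s t assume st: "s \<in> {0..1}" "t \<in> {0..1}" "aff a3 b3 c3 s t = 0"
  show "t \<le> td"
  proof (cases "a3 - c3 < 0")
    case False
    have "0 \<le> s * b3" using st(1) b3 by simp
    then have "a3 \<le> t * c3" using st(3) by (simp add: aff_def)
    moreover have "c3 < 0" using False straddle by linarith
    ultimately show ?thesis using D False by (simp add: le_divide_eq)
  qed (use D st in simp)
qed

text \<open>For a height increasing in both parameters, the boundary cycle (0,0), (1,0), (1,1), (0,1)
  rises through height 0 once, at (su, tu), and falls back once, at (sd, td).\<close>

lemma rising_height_zero_segment: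
  fixes a3 b3 c3 :: real
  assumes b3: "0 < b3" and c3: "c3 \<le> 0" and straddle: "a3 < 0" "0 \<le> a3 + b3 - c3"
  obtains su tu sd td where
    "su \<in> {0..1}" "tu \<in> {0..1}" "sd \<in> {0..1}" "td \<in> {0..1}"
    "aff a3 b3 c3 su tu = 0" "aff a3 b3 c3 sd td = 0"
    "su = 1 \<or> tu = 0" "sd = 0 \<or> td = 1"
    "\<And>s t. s \<in> {0..1} \<Longrightarrow> t \<in> {0..1} \<Longrightarrow> aff a3 b3 c3 s t = 0 \<Longrightarrow> tu \<le> t \<and> t \<le> td"
    "\<And>a1 b1 c1 a2 b2 c2. square_flux (aff a1 b1 c1) (aff a2 b2 c2) (aff a3 b3 c3) =
        quadrant (aff a1 b1 c1 su tu) (aff a2 b2 c2 su tu) - quadrant (aff a1 b1 c1 sd td) (aff a2 b2 c2 sd td)"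
proof -
  obtain su tu where U: "(su, tu) = (if 0 \<le> a3 + b3 then (-a3/b3, 0) else (1, (a3+b3)/c3))"
    by (metis surj_pair)
  obtain sd td where D: "(sd, td) = (if a3 - c3 < 0 then ((c3-a3)/b3, 1) else (0, a3/c3))"
    by (metis surj_pair)
  have flux: "square_flux (aff a1 b1 c1) (aff a2 b2 c2) (aff a3 b3 c3) =
      quadrant (aff a1 b1 c1 su tu) (aff a2 b2 c2 su tu) - quadrant (aff a1 b1 c1 sd td) (aff a2 b2 c2 sd td)"
    for a1 b1 c1 a2 b2 c2
    using square_flux_rising_half[OF b3 c3 straddle U, of a1 b1 c1 a2 b2 c2]
      square_flux_falling_half[OF b3 c3 straddle D, of a1 b1 c1 a2 b2 c2]
    unfolding square_flux_def Let_def by simp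
  show thesis
    by (rule that)
      (use flux rising_crossing_point[OF b3 straddle U] falling_crossing_point[OF b3 straddle D] in auto)
qed

lemma sgn_aff_change_on_level_set:
  assumes "0 < b3" "aff a3 b3 c3 su tu = 0" "aff a3 b3 c3 sd td = 0" "tu < td"
  shows "sgn (aff a b c su tu - aff a b c sd td) = sgn (b3 * c - b * c3)"
proof -
  have e: "su * b3 - sd * b3 = (tu - td) * c3" using assms(2,3) by (simp add: aff_def algebra_simps)
  have "b3 * (aff a b c su tu - aff a b c sd td) = (su * b3 - sd * b3) * b - b3 * (tu - td) * c"
    by (simp add: aff_def algebra_simps)
  also have "\<dots> = (td - tu) * (b3 * c - b * c3)" unfolding e by (simp add: algebra_simps)
  finally have "sgn b3 * sgn (aff a b c su tu - aff a b c sd td) = sgn (td - tu) * sgn (b3 * c - b * c3)"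
    by (simp add: sgn_mult[symmetric])
  then show ?thesis using assms(1,4) by simp
qed

lemma flux_counts_ray_hits_rising_height:
  fixes a1 b1 c1 a2 b2 c2 a3 b3 c3 :: real
  defines "F \<equiv> aff a1 b1 c1" and "G \<equiv> aff a2 b2 c2" and "H \<equiv> aff a3 b3 c3"
  assumes b3: "0 < b3" and c3: "c3 \<le> 0" and straddle: "a3 < 0" "0 \<le> a3 + b3 - c3"
    and transversal: "transversal_square F G H (b2*c3 - b3*c2) (b3*c1 - b1*c3)"
  shows "flux_counts_ray_hits F G H (b2*c3 - b3*c2) (b3*c1 - b1*c3)"
proof -
  obtain su tu sd td where ends: "su \<in> {0..1}" "tu \<in> {0..1}" "sd \<in> {0..1}" "td \<in> {0..1}"
    and zero: "aff a3 b3 c3 su tu = 0" "aff a3 b3 c3 sd td = 0"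
    and boundary: "su = 1 \<or> tu = 0" "sd = 0 \<or> td = 1"
    and between: "\<And>s t. s \<in> {0..1} \<Longrightarrow> t \<in> {0..1} \<Longrightarrow> aff a3 b3 c3 s t = 0 \<Longrightarrow> tu \<le> t \<and> t \<le> td"
    and flux: "\<And>a1 b1 c1 a2 b2 c2. square_flux (aff a1 b1 c1) (aff a2 b2 c2) (aff a3 b3 c3) =
        quadrant (aff a1 b1 c1 su tu) (aff a2 b2 c2 su tu) - quadrant (aff a1 b1 c1 sd td) (aff a2 b2 c2 sd td)"
    using rising_height_zero_segment[OF b3 c3 straddle] by blast
  define xu yu xd yd where "xu = F su tu" "yu = G su tu" "xd = F sd td" "yd = G sd td"
  \<comment> \<open>On the zero set of H, which is a segment, (F, G) runs along the segment from (xd, yd) to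
    (xu, yu); the rays are hit where this planar segment crosses the axes.\<close>
  have seg: "(\<exists>s\<in>{0..1}. \<exists>t\<in>{0..1}. H s t = 0 \<and> Q (F s t) (G s t)) \<longleftrightarrow>
      (\<exists>l\<in>{0..1}. Q ((1-l)*xd + l*xu) ((1-l)*yd + l*yu))" for Q
    unfolding xu_yu_xd_yd_def F_def G_def H_def aff_interpolate
    by (rule ex_zero_set_as_segment) (use b3 ends zero between in auto)
  have nonzero: "xd \<noteq> 0" "yd \<noteq> 0" "xu \<noteq> 0" "yu \<noteq> 0"
    using transversal ends boundary zero unfolding transversal_square_def xu_yu_xd_yd_def H_def by metis+
  have "\<forall>l\<in>{0..1}. \<not> ((1-l)*xd + l*xu = 0 \<and> (1-l)*yd + l*yu = 0)"
    using transversal seg[of "\<lambda>x y. x = 0 \<and> y = 0"] unfolding transversal_square_def by blast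
  note change = quadrant_change_along_segment[OF nonzero this]
  have hit_x: "meets_ray F G H \<longleftrightarrow> (\<exists>l\<in>{0..1}. (1-l)*yd + l*yu = 0 \<and> 0 < (1-l)*xd + l*xu)"
    using seg[of "\<lambda>x y. y = 0 \<and> 0 < x"] unfolding meets_ray_def by (metis (no_types, lifting))
  have hit_y: "meets_ray G F H \<longleftrightarrow> (\<exists>l\<in>{0..1}. (1-l)*xd + l*xu = 0 \<and> 0 < (1-l)*yd + l*yu)"
    using seg[of "\<lambda>x y. x = 0 \<and> 0 < y"] unfolding meets_ray_def by (metis (no_types, lifting))
  have "tu < td" if "meets_ray F G H \<or> meets_ray G F H"
  proof (rule ccontr)
    assume "\<not> tu < td"
    then have "tu = td" using between[OF ends(1,2) zero(1)] by simp
    moreover from this have "su * b3 = sd * b3" using zero unfolding aff_def \<open>tu = td\<close> by linarith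
    then have "su = sd" using b3 by simp
    ultimately have "xu = xd" "yu = yd" unfolding xu_yu_xd_yd_def by simp_all
    then show False using that nonzero unfolding hit_x hit_y by (auto simp: algebra_simps)
  qed
  then have "sgn (yu - yd) = - sgn (b2*c3 - b3*c2)" "sgn (xu - xd) = sgn (b3*c1 - b1*c3)"
    if "meets_ray F G H \<or> meets_ray G F H"
    using that sgn_aff_change_on_level_set[OF b3 zero] unfolding xu_yu_xd_yd_def F_def G_def
    by (simp_all add: sgn_minus[symmetric])
  then show ?thesis
    unfolding flux_counts_ray_hits_def F_def G_def H_def flux
    unfolding F_def[symmetric] G_def[symmetric] H_def[symmetric] xu_yu_xd_yd_def[symmetric] change
    unfolding hit_x[symmetric] hit_y[symmetric] by auto
qed

lemma quadrant_flux_cycle_reverse: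
  "quadrant_flux a b + quadrant_flux b c + quadrant_flux c d + quadrant_flux d a =
    - (quadrant_flux d c + quadrant_flux c b + quadrant_flux b a + quadrant_flux a d)"
  using quadrant_flux_swap[of a b] quadrant_flux_swap[of b c] quadrant_flux_swap[of c d]
    quadrant_flux_swap[of d a] by linarith

lemma square_flux_flip_s:
  "square_flux (\<lambda>s t. F (1-s) t) (\<lambda>s t. G (1-s) t) (\<lambda>s t. H (1-s) t) = - square_flux F G H"
  using quadrant_flux_cycle_reverse[of "(F 1 0, G 1 0, H 1 0)" "(F 1 1, G 1 1, H 1 1)"
      "(F 0 1, G 0 1, H 0 1)" "(F 0 0, G 0 0, H 0 0)"]
  unfolding square_flux_def Let_def by simp

lemma square_flux_flip_t:
  "square_flux (\<lambda>s t. F s (1-t)) (\<lambda>s t. G s (1-t)) (\<lambda>s t. H s (1-t)) = - square_flux F G H"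
  using quadrant_flux_cycle_reverse[of "(F 0 0, G 0 0, H 0 0)" "(F 1 0, G 1 0, H 1 0)"
      "(F 1 1, G 1 1, H 1 1)" "(F 0 1, G 0 1, H 0 1)"]
  unfolding square_flux_def Let_def by simp

lemma square_flux_swap:
  "square_flux (\<lambda>s t. F t s) (\<lambda>s t. G t s) (\<lambda>s t. H t s) = - square_flux F G H"
  using quadrant_flux_cycle_reverse[of "(F 0 0, G 0 0, H 0 0)" "(F 1 0, G 1 0, H 1 0)"
      "(F 1 1, G 1 1, H 1 1)" "(F 0 1, G 0 1, H 0 1)"]
  unfolding square_flux_def Let_def by simp

lemma flux_counts_ray_hits_flip_s:
  assumes "transversal_square F G H Jx Jy"
    and "transversal_square (\<lambda>s t. F (1-s) t) (\<lambda>s t. G (1-s) t) (\<lambda>s t. H (1-s) t) (-Jx) (-Jy) \<Longrightarrow>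
      flux_counts_ray_hits (\<lambda>s t. F (1-s) t) (\<lambda>s t. G (1-s) t) (\<lambda>s t. H (1-s) t) (-Jx) (-Jy)"
  shows "flux_counts_ray_hits F G H Jx Jy"
  by (rule flux_counts_ray_hits_by_symmetry[where \<phi> = "\<lambda>s t. 1-s" and \<psi> = "\<lambda>s t. t",
        OF _ square_flux_flip_s assms]) auto

lemma flux_counts_ray_hits_flip_t:
  assumes "transversal_square F G H Jx Jy"
    and "transversal_square (\<lambda>s t. F s (1-t)) (\<lambda>s t. G s (1-t)) (\<lambda>s t. H s (1-t)) (-Jx) (-Jy) \<Longrightarrow>
      flux_counts_ray_hits (\<lambda>s t. F s (1-t)) (\<lambda>s t. G s (1-t)) (\<lambda>s t. H s (1-t)) (-Jx) (-Jy)"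
  shows "flux_counts_ray_hits F G H Jx Jy"
  by (rule flux_counts_ray_hits_by_symmetry[where \<phi> = "\<lambda>s t. s" and \<psi> = "\<lambda>s t. 1-t",
        OF _ square_flux_flip_t assms]) auto

lemma flux_counts_ray_hits_swap:
  assumes "transversal_square F G H Jx Jy"
    and "transversal_square (\<lambda>s t. F t s) (\<lambda>s t. G t s) (\<lambda>s t. H t s) (-Jx) (-Jy) \<Longrightarrow>
      flux_counts_ray_hits (\<lambda>s t. F t s) (\<lambda>s t. G t s) (\<lambda>s t. H t s) (-Jx) (-Jy)"
  shows "flux_counts_ray_hits F G H Jx Jy"
  by (rule flux_counts_ray_hits_by_symmetry[where \<phi> = "\<lambda>s t. t" and \<psi> = "\<lambda>s t. s",
        OF _ square_flux_swap assms]) auto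

lemma aff_bounds_on_square:
  assumes "0 \<le> b" "c \<le> 0" "s \<in> {0..1}" "t \<in> {0..1}"
  shows "a \<le> aff a b c s t" "aff a b c s t \<le> a + b - c"
proof -
  have "0 \<le> s * b" "s * b \<le> b" using assms by (auto simp: mult_left_le_one_le)
  moreover have "t * c \<le> 0" "c \<le> t * c"
    using assms mult_left_le_one_le[of "-c" t] by (auto simp: mult_nonneg_nonpos)
  ultimately show "a \<le> aff a b c s t" "aff a b c s t \<le> a + b - c" unfolding aff_def by linarith+
qed

lemma flux_counts_ray_hits_monotone_height:
  fixes a1 b1 c1 a2 b2 c2 a3 b3 c3 :: real
  defines "F \<equiv> aff a1 b1 c1" and "G \<equiv> aff a2 b2 c2" and "H \<equiv> aff a3 b3 c3"
  assumes b3: "0 < b3" and c3: "c3 \<le> 0"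
    and transversal: "transversal_square F G H (b2*c3 - b3*c2) (b3*c1 - b1*c3)"
  shows "flux_counts_ray_hits F G H (b2*c3 - b3*c2) (b3*c1 - b1*c3)"
proof -
  have range: "a3 \<le> H s t \<and> H s t \<le> a3 + b3 - c3" if "s \<in> {0..1}" "t \<in> {0..1}" for s t
    unfolding H_def using aff_bounds_on_square[OF less_imp_le[OF b3] c3 that] by simp
  consider (straddle) "a3 < 0" "0 \<le> a3 + b3 - c3" | (pos) "0 < a3" | (neg) "a3 + b3 - c3 < 0"
    | (zero) "a3 = 0"
    by linarith
  then show ?thesis
  proof cases
    case straddle
    then show ?thesis
      unfolding F_def G_def H_def
      by (rule flux_counts_ray_hits_rising_height[OF b3 c3 _ _ transversal[unfolded F_def G_def H_def]])
  next
    case pos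
    then have "0 < H s t" if "s \<in> {0..1}" "t \<in> {0..1}" for s t using range[OF that] by linarith
    moreover from this have "\<not> meets_ray F G H" "\<not> meets_ray G F H"
      unfolding meets_ray_def by (metis less_irrefl)+
    ultimately show ?thesis by (intro flux_counts_ray_hits_no_crossing) (auto simp: less_imp_le)
  next
    case neg
    then have "H s t < 0" if "s \<in> {0..1}" "t \<in> {0..1}" for s t using range[OF that] by linarith
    moreover from this have "\<not> meets_ray F G H" "\<not> meets_ray G F H"
      unfolding meets_ray_def by (metis less_irrefl)+
    moreover from calculation have "\<not> 0 \<le> H 0 0" "\<not> 0 \<le> H 1 0" "\<not> 0 \<le> H 1 1" "\<not> 0 \<le> H 0 1"
      by (auto simp: not_le)
    ultimately show ?thesis by (intro flux_counts_ray_hits_no_crossing) simp_all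
  next
    case zero
    have "s = 0" if "s \<in> {0..1}" "t \<in> {0..1}" "H s t = 0" for s t
    proof -
      have "s * b3 = t * c3" using that(3) zero unfolding H_def aff_def by simp
      moreover have "t * c3 \<le> 0" "0 \<le> s * b3" using that(1,2) c3 b3 by (auto simp: mult_nonneg_nonpos)
      ultimately have "s * b3 = 0" by linarith
      then show ?thesis using b3 by simp
    qed
    moreover have "0 \<le> H s t" if "s \<in> {0..1}" "t \<in> {0..1}" for s t using range[OF that] zero by linarith
    moreover from calculation(1) have "\<not> meets_ray F G H" "\<not> meets_ray G F H"
      using transversal unfolding meets_ray_def transversal_square_def by (metis order_less_irrefl)+
    ultimately show ?thesis by (intro flux_counts_ray_hits_no_crossing) auto
  qed
qed

lemma aff_flip_s: "(\<lambda>s t. aff a b c (1-s) t) = aff (a+b) (-b) c"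
  by (intro ext) (simp add: aff_def algebra_simps)

lemma aff_flip_t: "(\<lambda>s t. aff a b c s (1-t)) = aff (a-c) b (-c)"
  by (intro ext) (simp add: aff_def algebra_simps)

lemma aff_swap: "(\<lambda>s t. aff a b c t s) = aff a (-c) (-b)"
  by (intro ext) (simp add: aff_def algebra_simps)

lemma flux_counts_ray_hits_pos_b3:
  fixes a1 b1 c1 a2 b2 c2 a3 b3 c3 :: real
  assumes b3: "0 < b3"
    and transversal: "transversal_square (aff a1 b1 c1) (aff a2 b2 c2) (aff a3 b3 c3)
      (b2*c3 - b3*c2) (b3*c1 - b1*c3)"
  shows "flux_counts_ray_hits (aff a1 b1 c1) (aff a2 b2 c2) (aff a3 b3 c3)
      (b2*c3 - b3*c2) (b3*c1 - b1*c3)"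
proof (cases "c3 \<le> 0")
  case True
  then show ?thesis using flux_counts_ray_hits_monotone_height[OF b3 _ transversal] by blast
next
  case False
  have J: "- (b2*c3 - b3*c2) = b2*(-c3) - b3*(-c2)" "- (b3*c1 - b1*c3) = b3*(-c1) - b1*(-c3)"
    by simp_all
  show ?thesis
  proof (rule flux_counts_ray_hits_flip_t[OF transversal])
    assume "transversal_square (\<lambda>s t. aff a1 b1 c1 s (1-t)) (\<lambda>s t. aff a2 b2 c2 s (1-t))
      (\<lambda>s t. aff a3 b3 c3 s (1-t)) (- (b2*c3 - b3*c2)) (- (b3*c1 - b1*c3))"
    then have "transversal_square (aff (a1-c1) b1 (-c1)) (aff (a2-c2) b2 (-c2)) (aff (a3-c3) b3 (-c3))
      (b2*(-c3) - b3*(-c2)) (b3*(-c1) - b1*(-c3))"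
      unfolding aff_flip_t J .
    from flux_counts_ray_hits_monotone_height[OF b3 _ this] False
    show "flux_counts_ray_hits (\<lambda>s t. aff a1 b1 c1 s (1-t)) (\<lambda>s t. aff a2 b2 c2 s (1-t))
      (\<lambda>s t. aff a3 b3 c3 s (1-t)) (- (b2*c3 - b3*c2)) (- (b3*c1 - b1*c3))"
      unfolding aff_flip_t J by simp
  qed
qed

lemma flux_counts_ray_hits_nonzero_b3:
  fixes a1 b1 c1 a2 b2 c2 a3 b3 c3 :: real
  assumes b3: "b3 \<noteq> 0"
    and transversal: "transversal_square (aff a1 b1 c1) (aff a2 b2 c2) (aff a3 b3 c3)
      (b2*c3 - b3*c2) (b3*c1 - b1*c3)"
  shows "flux_counts_ray_hits (aff a1 b1 c1) (aff a2 b2 c2) (aff a3 b3 c3)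
      (b2*c3 - b3*c2) (b3*c1 - b1*c3)"
proof (cases "0 < b3")
  case True
  then show ?thesis using flux_counts_ray_hits_pos_b3 transversal by blast
next
  case False
  then have "0 < - b3" using b3 by simp
  have J: "- (b2*c3 - b3*c2) = (-b2)*c3 - (-b3)*c2" "- (b3*c1 - b1*c3) = (-b3)*c1 - (-b1)*c3"
    by simp_all
  show ?thesis
  proof (rule flux_counts_ray_hits_flip_s[OF transversal])
    assume "transversal_square (\<lambda>s t. aff a1 b1 c1 (1-s) t) (\<lambda>s t. aff a2 b2 c2 (1-s) t)
      (\<lambda>s t. aff a3 b3 c3 (1-s) t) (- (b2*c3 - b3*c2)) (- (b3*c1 - b1*c3))"
    then have "transversal_square (aff (a1+b1) (-b1) c1) (aff (a2+b2) (-b2) c2) (aff (a3+b3) (-b3) c3)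
      ((-b2)*c3 - (-b3)*c2) ((-b3)*c1 - (-b1)*c3)"
      unfolding aff_flip_s J .
    from flux_counts_ray_hits_pos_b3[OF \<open>0 < - b3\<close> this]
    show "flux_counts_ray_hits (\<lambda>s t. aff a1 b1 c1 (1-s) t) (\<lambda>s t. aff a2 b2 c2 (1-s) t)
      (\<lambda>s t. aff a3 b3 c3 (1-s) t) (- (b2*c3 - b3*c2)) (- (b3*c1 - b1*c3))"
      unfolding aff_flip_s J .
  qed
qed

lemma flux_counts_ray_hits_aff:
  fixes a1 b1 c1 a2 b2 c2 a3 b3 c3 :: real
  assumes transversal: "transversal_square (aff a1 b1 c1) (aff a2 b2 c2) (aff a3 b3 c3)
      (b2*c3 - b3*c2) (b3*c1 - b1*c3)"
  shows "flux_counts_ray_hits (aff a1 b1 c1) (aff a2 b2 c2) (aff a3 b3 c3)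
      (b2*c3 - b3*c2) (b3*c1 - b1*c3)"
proof -
  consider "b3 \<noteq> 0" | "b3 = 0" "c3 \<noteq> 0" | "b3 = 0" "c3 = 0" by blast
  then show ?thesis
  proof cases
    case 1
    then show ?thesis using flux_counts_ray_hits_nonzero_b3 transversal by blast
  next
    case 2
    then have "- c3 \<noteq> 0" by simp
    have J: "- (b2*c3 - b3*c2) = (-c2)*(-b3) - (-c3)*(-b2)" "- (b3*c1 - b1*c3) = (-c3)*(-b1) - (-c1)*(-b3)"
      by simp_all
    show ?thesis
    proof (rule flux_counts_ray_hits_swap[OF transversal])
      assume "transversal_square (\<lambda>s t. aff a1 b1 c1 t s) (\<lambda>s t. aff a2 b2 c2 t s)
        (\<lambda>s t. aff a3 b3 c3 t s) (- (b2*c3 - b3*c2)) (- (b3*c1 - b1*c3))"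
      then have "transversal_square (aff a1 (-c1) (-b1)) (aff a2 (-c2) (-b2)) (aff a3 (-c3) (-b3))
        ((-c2)*(-b3) - (-c3)*(-b2)) ((-c3)*(-b1) - (-c1)*(-b3))"
        unfolding aff_swap J .
      from flux_counts_ray_hits_nonzero_b3[OF \<open>- c3 \<noteq> 0\<close> this]
      show "flux_counts_ray_hits (\<lambda>s t. aff a1 b1 c1 t s) (\<lambda>s t. aff a2 b2 c2 t s)
        (\<lambda>s t. aff a3 b3 c3 t s) (- (b2*c3 - b3*c2)) (- (b3*c1 - b1*c3))"
        unfolding aff_swap J .
    qed
  next
    case 3
    then have "b2*c3 - b3*c2 = 0" "b3*c1 - b1*c3 = 0" by simp_all
    then have "\<not> meets_ray (aff a1 b1 c1) (aff a2 b2 c2) (aff a3 b3 c3)"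
      "\<not> meets_ray (aff a2 b2 c2) (aff a1 b1 c1) (aff a3 b3 c3)"
      using transversal unfolding transversal_square_def meets_ray_def by blast+
    then show ?thesis using 3 by (intro flux_counts_ray_hits_no_crossing) (simp_all add: aff_def)
  qed
qed

section \<open>Coordinates adapted to two directions\<close>

text \<open>Coordinates with respect to the basis (u, u', u \<times> u'), for u \<times> u' \<noteq> 0: the directions u and
  u' become the x- and the y-axis.\<close>

definition frame1 :: "real^3 \<Rightarrow> real^3 \<Rightarrow> real^3 \<Rightarrow> real" where
  "frame1 u u' z = (z \<bullet> cross3 u' (cross3 u u')) / (cross3 u u' \<bullet> cross3 u u')"

definition frame2 :: "real^3 \<Rightarrow> real^3 \<Rightarrow> real^3 \<Rightarrow> real" where
  "frame2 u u' z = (z \<bullet> cross3 (cross3 u u') u) / (cross3 u u' \<bullet> cross3 u u')"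

definition frame3 :: "real^3 \<Rightarrow> real^3 \<Rightarrow> real^3 \<Rightarrow> real" where
  "frame3 u u' z = (z \<bullet> cross3 u u') / (cross3 u u' \<bullet> cross3 u u')"

definition frame :: "real^3 \<Rightarrow> real^3 \<Rightarrow> real^3 \<Rightarrow> real \<times> real \<times> real" where
  "frame u u' z = (frame1 u u' z, frame2 u u' z, frame3 u u' z)"

lemma frame_linear:
  "frame1 u u' (x + y) = frame1 u u' x + frame1 u u' y" "frame1 u u' (x - y) = frame1 u u' x - frame1 u u' y"
  "frame1 u u' (r *\<^sub>R x) = r * frame1 u u' x" "frame1 u u' (- x) = - frame1 u u' x"
  "frame2 u u' (x + y) = frame2 u u' x + frame2 u u' y" "frame2 u u' (x - y) = frame2 u u' x - frame2 u u' y"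
  "frame2 u u' (r *\<^sub>R x) = r * frame2 u u' x" "frame2 u u' (- x) = - frame2 u u' x"
  "frame3 u u' (x + y) = frame3 u u' x + frame3 u u' y" "frame3 u u' (x - y) = frame3 u u' x - frame3 u u' y"
  "frame3 u u' (r *\<^sub>R x) = r * frame3 u u' x" "frame3 u u' (- x) = - frame3 u u' x"
  unfolding frame1_def frame2_def frame3_def
  by (simp_all add: inner_add_left inner_diff_left add_divide_distrib diff_divide_distrib)

lemma triple_product_expansion:
  fixes a b c z :: "real^3"
  shows "(a \<bullet> cross3 b c) *\<^sub>R z = (z \<bullet> cross3 b c) *\<^sub>R a + (z \<bullet> cross3 c a) *\<^sub>R b + (z \<bullet> cross3 a b) *\<^sub>R c"
  apply (simp only: vec_eq_iff forall_3 cross3_def inner_vec_def sum_3 vector_component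
      vector_add_component vector_scaleR_component)
  apply (simp only: vector_3 inner_real_def real_scaleR_def)
  apply (intro conjI; algebra)
  done

lemma frame_expansion:
  assumes "cross3 u u' \<noteq> 0"
  shows "z = frame1 u u' z *\<^sub>R u + frame2 u u' z *\<^sub>R u' + frame3 u u' z *\<^sub>R cross3 u u'"
proof -
  define m where "m = cross3 u u'"
  have "m \<bullet> m > 0" using assms unfolding m_def by simp
  have "u \<bullet> cross3 u' m = m \<bullet> m" unfolding m_def by (metis cross_triple inner_commute)
  then have "(m \<bullet> m) *\<^sub>R z = (z \<bullet> cross3 u' m) *\<^sub>R u + (z \<bullet> cross3 m u) *\<^sub>R u' + (z \<bullet> m) *\<^sub>R m"
    using triple_product_expansion[of u u' m z] unfolding m_def by simp
  then have "z = (1 / (m \<bullet> m)) *\<^sub>R ((z \<bullet> cross3 u' m) *\<^sub>R u + (z \<bullet> cross3 m u) *\<^sub>R u' + (z \<bullet> m) *\<^sub>R m)"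
    using \<open>m \<bullet> m > 0\<close> by (metis divide_self_if less_irrefl scaleR_one scaleR_scaleR times_divide_eq_left mult.commute)
  then show ?thesis
    unfolding frame1_def frame2_def frame3_def m_def[symmetric]
    by (simp add: scaleR_add_right divide_inverse_commute)
qed

lemma frame_of_u:
  assumes "cross3 u u' \<noteq> 0"
  shows "frame1 u u' u = 1" "frame2 u u' u = 0" "frame3 u u' u = 0"
    and "frame1 u u' u' = 0" "frame2 u u' u' = 1" "frame3 u u' u' = 0"
proof -
  have d: "cross3 u u' \<bullet> cross3 u u' \<noteq> 0" using assms by simp
  have "u \<bullet> cross3 u' (cross3 u u') = cross3 u u' \<bullet> cross3 u u'"
    "u' \<bullet> cross3 (cross3 u u') u = cross3 u u' \<bullet> cross3 u u'"
    by (metis cross_triple inner_commute)+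
  then show "frame1 u u' u = 1" "frame2 u u' u' = 1"
    unfolding frame1_def frame2_def using d by simp_all
  show "frame2 u u' u = 0" "frame3 u u' u = 0" "frame1 u u' u' = 0" "frame3 u u' u' = 0"
    unfolding frame1_def frame2_def frame3_def by (simp_all add: dot_cross_self)
qed

lemma frame_eq_0_iff:
  assumes "cross3 u u' \<noteq> 0"
  shows "frame1 u u' z = 0 \<and> frame2 u u' z = 0 \<and> frame3 u u' z = 0 \<longleftrightarrow> z = 0"
  using frame_expansion[OF assms, of z] by (auto simp: frame_linear frame1_def frame2_def frame3_def)

lemma ex_parallel_u_iff:
  assumes "cross3 u u' \<noteq> 0"
  shows "(\<exists>\<tau>. z = \<tau> *\<^sub>R u \<and> P \<tau>) \<longleftrightarrow> frame2 u u' z = 0 \<and> frame3 u u' z = 0 \<and> P (frame1 u u' z)"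
  using frame_expansion[OF assms, of z] frame_of_u[OF assms] by (auto simp: frame_linear)

lemma ex_parallel_u'_iff:
  assumes "cross3 u u' \<noteq> 0"
  shows "(\<exists>\<tau>. z = \<tau> *\<^sub>R u' \<and> P \<tau>) \<longleftrightarrow> frame1 u u' z = 0 \<and> frame3 u u' z = 0 \<and> P (frame2 u u' z)"
  using frame_expansion[OF assms, of z] frame_of_u[OF assms] by (auto simp: frame_linear)

lemma cross_inner_u_frame:
  assumes "cross3 u u' \<noteq> 0"
  shows "cross3 a b \<bullet> u =
    (cross3 u u' \<bullet> cross3 u u') * (frame2 u u' a * frame3 u u' b - frame3 u u' a * frame2 u u' b)"
proof -
  define m where "m = cross3 u u'"
  have m: "m \<bullet> m > 0" "u \<bullet> m = 0" using assms unfolding m_def by (simp_all add: dot_cross_self)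
  have "(a \<bullet> cross3 m u) * (b \<bullet> m) - (a \<bullet> m) * (b \<bullet> cross3 m u) = cross3 a b \<bullet> cross3 (cross3 m u) m"
    by (simp add: dot_cross)
  also have "cross3 (cross3 m u) m = (m \<bullet> m) *\<^sub>R u"
  proof -
    have "cross3 (cross3 m u) m = cross3 m (cross3 u m)"
      using cross_skew[of "cross3 m u" m] cross_skew[of m u] by simp
    then show ?thesis using Lagrange[of m u m] m(2) by (simp add: inner_commute)
  qed
  finally show ?thesis
    unfolding frame2_def frame3_def m_def[symmetric] using m(1) by (simp add: field_simps)
qed

lemma cross_inner_u'_frame:
  assumes "cross3 u u' \<noteq> 0"
  shows "cross3 a b \<bullet> u' =
    (cross3 u u' \<bullet> cross3 u u') * (frame3 u u' a * frame1 u u' b - frame1 u u' a * frame3 u u' b)"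
proof -
  define m where "m = cross3 u u'"
  have m: "m \<bullet> m > 0" "u' \<bullet> m = 0" using assms unfolding m_def by (simp_all add: dot_cross_self)
  have "(a \<bullet> m) * (b \<bullet> cross3 u' m) - (a \<bullet> cross3 u' m) * (b \<bullet> m) = cross3 a b \<bullet> cross3 m (cross3 u' m)"
    by (simp add: dot_cross)
  also have "cross3 m (cross3 u' m) = (m \<bullet> m) *\<^sub>R u'"
    using Lagrange[of m u' m] m(2) by (simp add: inner_commute)
  finally show ?thesis
    unfolding frame1_def frame3_def m_def[symmetric] using m(1) by (simp add: field_simps)
qed

section \<open>Edges, projections and the writhe\<close>

lemma mem_seg_iff: "x \<in> seg v n i \<longleftrightarrow> (\<exists>s\<in>{0..1}. x = v i + s *\<^sub>R edge_dir v n i)"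
proof -
  have "(1 - s) *\<^sub>R v i + s *\<^sub>R v (Suc i mod n) = v i + s *\<^sub>R edge_dir v n i" for s
    by (simp add: edge_dir_def algebra_simps)
  then show ?thesis unfolding seg_def closed_segment_def by auto
qed

lemma seg_endpoints: "v i \<in> seg v n i" "v (Suc i mod n) \<in> seg v n i"
  unfolding seg_def by simp_all

lemma proj_diff: "proj u (x - y) = proj u x - proj u y"
  unfolding proj_def by (simp add: inner_diff_left algebra_simps diff_divide_distrib)

lemma proj_scaleR: "proj u (r *\<^sub>R x) = r *\<^sub>R proj u x"
  unfolding proj_def by (simp add: algebra_simps)

lemma proj_eq_0_iff:
  assumes "u \<noteq> 0"
  shows "proj u x = 0 \<longleftrightarrow> (\<exists>\<tau>. x = \<tau> *\<^sub>R u)"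
proof
  assume "proj u x = 0"
  then show "\<exists>\<tau>. x = \<tau> *\<^sub>R u" unfolding proj_def by (intro exI[of _ "(x \<bullet> u) / (u \<bullet> u)"]) simp
qed (use assms in \<open>auto simp: proj_def\<close>)

lemma proj_eq_iff:
  assumes "u \<noteq> 0"
  shows "proj u x = proj u y \<longleftrightarrow> (\<exists>\<tau>. x - y = \<tau> *\<^sub>R u)"
  using proj_eq_0_iff[OF assms, of "x - y"] proj_diff[of u x y] by simp

lemma proj_scaleR_direction:
  assumes "k \<noteq> 0"
  shows "proj (k *\<^sub>R u) = proj u"
proof
  fix x
  have "(x \<bullet> (k *\<^sub>R u)) / ((k *\<^sub>R u) \<bullet> (k *\<^sub>R u)) * k = (x \<bullet> u) / (u \<bullet> u)"
    using assms by (simp add: field_simps)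
  then show "proj (k *\<^sub>R u) x = proj u x" unfolding proj_def by (metis scaleR_scaleR)
qed

lemma pseg_inter_nonempty_iff:
  assumes "u \<noteq> 0"
  shows "pseg u v n i \<inter> pseg u v n j \<noteq> {} \<longleftrightarrow> (\<exists>p\<in>seg v n i. \<exists>q\<in>seg v n j. \<exists>\<tau>. p - q = \<tau> *\<^sub>R u)"
  unfolding pseg_def using proj_eq_iff[OF assms] by blast

lemma adjacent_sym: "adjacent n i j \<longleftrightarrow> adjacent n j i"
  unfolding adjacent_def by blast

lemma polygonal_knotD:
  assumes "polygonal_knot v n"
  shows polygonal_knot_ge_3: "3 \<le> n"
    and polygonal_knot_edge_nondegenerate: "\<And>i. i < n \<Longrightarrow> v i \<noteq> v (Suc i mod n)"
    and polygonal_knot_disjoint: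
      "\<And>i j. i < n \<Longrightarrow> j < n \<Longrightarrow> i \<noteq> j \<Longrightarrow> \<not> adjacent n i j \<Longrightarrow> seg v n i \<inter> seg v n j = {}"
  using assms unfolding polygonal_knot_def by blast+

lemma polygonal_knot_adjacent_inter:
  assumes "polygonal_knot v n" "i < n"
  shows "seg v n i \<inter> seg v n (Suc i mod n) = {v (Suc i mod n)}"
proof -
  have "Suc i mod n < n" using assms(2) by simp
  then show ?thesis using assms unfolding polygonal_knot_def by blast
qed

lemma general_positionD:
  assumes "general_position v n u"
  shows general_position_nonzero: "u \<noteq> 0"
    and general_position_edge: "\<And>i. i < n \<Longrightarrow> proj u (edge_dir v n i) \<noteq> 0"
    and general_position_crossing:
      "\<And>i j. i < n \<Longrightarrow> j < n \<Longrightarrow> i \<noteq> j \<Longrightarrow> \<not> adjacent n i j \<Longrightarrow>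
        finite (pseg u v n i \<inter> pseg u v n j) \<and> card (pseg u v n i \<inter> pseg u v n j) \<le> 1"
    and general_position_vertex:
      "\<And>i j k. i < n \<Longrightarrow> j < n \<Longrightarrow> i \<noteq> j \<Longrightarrow> \<not> adjacent n i j \<Longrightarrow> k < n \<Longrightarrow>
        proj u (v k) \<notin> pseg u v n i \<inter> pseg u v n j"
    and general_position_transverse:
      "\<And>i j. i < n \<Longrightarrow> j < n \<Longrightarrow> i \<noteq> j \<Longrightarrow> \<not> adjacent n i j \<Longrightarrow>
        pseg u v n i \<inter> pseg u v n j \<noteq> {} \<Longrightarrow> cross3 (edge_dir v n i) (edge_dir v n j) \<bullet> u \<noteq> 0"
proof -
  note gp = assms[unfolded general_position_def]
  show "u \<noteq> 0" by (rule gp[THEN conjunct1])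
  show "\<And>i. i < n \<Longrightarrow> proj u (edge_dir v n i) \<noteq> 0"
    by (rule gp[THEN conjunct2, THEN conjunct1, rule_format])
  fix i j k
  assume ij: "i < n" "j < n" "i \<noteq> j" "\<not> adjacent n i j"
  note crossing = gp[THEN conjunct2, THEN conjunct2, THEN conjunct2, THEN conjunct1, rule_format,
      OF ij(1,2) conjI[OF ij(3,4)]]
  show "finite (pseg u v n i \<inter> pseg u v n j) \<and> card (pseg u v n i \<inter> pseg u v n j) \<le> 1"
    using crossing by simp
  show "k < n \<Longrightarrow> proj u (v k) \<notin> pseg u v n i \<inter> pseg u v n j"
    using crossing by simp
  show "pseg u v n i \<inter> pseg u v n j \<noteq> {} \<Longrightarrow> cross3 (edge_dir v n i) (edge_dir v n j) \<bullet> u \<noteq> 0"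
    using crossing by simp
qed

lemma inj_on_proj_seg:
  assumes "general_position v n u" "i < n"
  shows "inj_on (proj u) (seg v n i)"
proof
  fix p p' assume "p \<in> seg v n i" "p' \<in> seg v n i" and eq: "proj u p = proj u p'"
  then obtain s s' where p: "p = v i + s *\<^sub>R edge_dir v n i" "p' = v i + s' *\<^sub>R edge_dir v n i"
    unfolding mem_seg_iff by blast
  have "(s - s') *\<^sub>R proj u (edge_dir v n i) = proj u p - proj u p'"
    unfolding p proj_diff[symmetric] proj_scaleR[symmetric] by (simp add: algebra_simps)
  then have "s = s'" using eq general_position_edge[OF assms] by simp
  then show "p = p'" using p by simp
qed

lemma crossing_height_unique:
  assumes gp: "general_position v n w" and ij: "i < n" "j < n" "i \<noteq> j" "\<not> adjacent n i j"
    and pq: "p \<in> seg v n i" "q \<in> seg v n j" "p - q = \<tau> *\<^sub>R w"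
    and pq': "p' \<in> seg v n i" "q' \<in> seg v n j" "p' - q' = \<tau>' *\<^sub>R w"
  shows "\<tau>' = \<tau>"
proof -
  have w: "w \<noteq> 0" by (rule general_position_nonzero[OF gp])
  have proj_pq: "proj w p = proj w q" "proj w p' = proj w q'"
    using proj_eq_iff[OF w] pq(3) pq'(3) by blast+
  then have "proj w p \<in> pseg w v n i \<inter> pseg w v n j" "proj w p' \<in> pseg w v n i \<inter> pseg w v n j"
    using pq pq' unfolding pseg_def by (metis IntI imageI)+
  then have "proj w p = proj w p'"
    using general_position_crossing[OF gp ij] card_le_Suc0_iff_eq by fastforce
  then have "p = p'" "q = q'"
    using inj_on_proj_seg[OF gp] ij(1,2) pq pq' proj_pq unfolding inj_on_def by metis+
  then have "\<tau>' *\<^sub>R w = \<tau> *\<^sub>R w" using pq(3) pq'(3) by simp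
  then show ?thesis using w by simp
qed

text \<open>The share of edge i in the sign of its crossing with edge j: nonzero exactly when edge i
  is the over-strand for the viewer at the far end of w (cf. \<^const>\<open>height\<close>).\<close>

definition over_sign :: "(nat \<Rightarrow> real^3) \<Rightarrow> nat \<Rightarrow> real^3 \<Rightarrow> nat \<Rightarrow> nat \<Rightarrow> real" where
  "over_sign v n w i j =
    (if \<exists>p\<in>seg v n i. \<exists>q\<in>seg v n j. \<exists>\<tau>>0. p - q = \<tau> *\<^sub>R w
     then sgn (cross3 (edge_dir v n i) (edge_dir v n j) \<bullet> w) else 0)"

lemma crossing_sign_eq_over_sign:
  assumes K: "polygonal_knot v n" and gp: "general_position v n w"
    and ij: "i < n" "j < n" "i \<noteq> j" "\<not> adjacent n i j"
    and crossing: "pseg w v n i \<inter> pseg w v n j \<noteq> {}"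
  shows "crossing_sign v n w i j = over_sign v n w i j + over_sign v n w j i"
proof -
  obtain p q \<tau> where pq: "p \<in> seg v n i" "q \<in> seg v n j" "p - q = \<tau> *\<^sub>R w"
    using crossing pseg_inter_nonempty_iff[OF general_position_nonzero[OF gp]] by blast
  note unique = crossing_height_unique[OF gp ij pq]
  have "p \<noteq> q" using polygonal_knot_disjoint[OF K ij] pq by blast
  then have "\<tau> \<noteq> 0" using pq by auto
  have height: "height v n w i j = \<tau>"
    unfolding height_def
  proof (rule some_equality)
    fix t assume "\<exists>p\<in>seg v n i. \<exists>q\<in>seg v n j. p - q = t *\<^sub>R w"
    then show "t = \<tau>" using unique by blast
  qed (use pq in blast)
  have over_ij: "(\<exists>p\<in>seg v n i. \<exists>q\<in>seg v n j. \<exists>\<tau>'>0. p - q = \<tau>' *\<^sub>R w) \<longleftrightarrow> \<tau> > 0"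
    using pq unique by blast
  have "q - p = (-\<tau>) *\<^sub>R w" using pq(3) by (metis minus_diff_eq scaleR_minus_left)
  moreover have "\<tau>' = -\<tau>" if "q' \<in> seg v n j" "p' \<in> seg v n i" "q' - p' = \<tau>' *\<^sub>R w" for p' q' \<tau>'
    using unique[OF that(2,1), of "-\<tau>'"] that(3) by (metis minus_diff_eq scaleR_minus_left minus_minus)
  ultimately have over_ji: "(\<exists>q\<in>seg v n j. \<exists>p\<in>seg v n i. \<exists>\<tau>'>0. q - p = \<tau>' *\<^sub>R w) \<longleftrightarrow> \<tau> < 0"
    using pq(1,2) by (metis neg_0_less_iff_less)
  have "cross3 (edge_dir v n j) (edge_dir v n i) \<bullet> w = - (cross3 (edge_dir v n i) (edge_dir v n j) \<bullet> w)"
    by (subst cross_skew) simp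
  then show ?thesis
    unfolding crossing_sign_def over_sign_def height over_ij over_ji
    using \<open>\<tau> \<noteq> 0\<close> by (auto simp: sgn_mult sgn_minus)
qed

lemma over_sign_eq_0:
  assumes "general_position v n w" and "pseg w v n i \<inter> pseg w v n j = {}"
  shows "over_sign v n w i j = 0"
proof -
  have "\<not> (\<exists>p\<in>seg v n i. \<exists>q\<in>seg v n j. \<exists>\<tau>. p - q = \<tau> *\<^sub>R w)"
    using assms pseg_inter_nonempty_iff[OF general_position_nonzero[OF assms(1)]] by blast
  then show ?thesis unfolding over_sign_def by auto
qed

lemma writhe_eq_sum_over_sign:
  assumes K: "polygonal_knot v n" and gp: "general_position v n w"
  shows "writhe v n w = (\<Sum>i<n. \<Sum>j | j < n \<and> j \<noteq> i \<and> \<not> adjacent n i j. over_sign v n w i j)"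
proof -
  define S where "S = {(i, j). i < j \<and> j < n \<and> \<not> adjacent n i j}"
  have fin: "finite S" by (rule finite_subset[of _ "{..<n} \<times> {..<n}"]) (auto simp: S_def)
  have "writhe v n w = (\<Sum>(i, j)\<in>S. over_sign v n w i j + over_sign v n w j i)"
    unfolding writhe_def
  proof (rule sum.mono_neutral_cong_left[OF fin])
    show "crossings v n w \<subseteq> S" unfolding crossings_def S_def by auto
    show "\<forall>x\<in>S - crossings v n w.
        (case x of (i, j) \<Rightarrow> over_sign v n w i j + over_sign v n w j i) = 0"
      using over_sign_eq_0[OF gp] unfolding S_def crossings_def by (auto simp: Int_commute)
    show "(case x of (i, j) \<Rightarrow> crossing_sign v n w i j) =
        (case x of (i, j) \<Rightarrow> over_sign v n w i j + over_sign v n w j i)"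
      if x: "x \<in> crossings v n w" for x
    proof -
      obtain i j where "x = (i, j)" "i < j" "j < n" "\<not> adjacent n i j" "pseg w v n i \<inter> pseg w v n j \<noteq> {}"
        using x unfolding crossings_def by auto
      then show ?thesis using crossing_sign_eq_over_sign[OF K gp] by simp
    qed
  qed
  also have "\<dots> = (\<Sum>(i, j)\<in>S. over_sign v n w i j) + (\<Sum>(i, j)\<in>prod.swap ` S. over_sign v n w i j)"
    by (simp add: sum.distrib sum.reindex case_prod_beta)
  also have "\<dots> = (\<Sum>(i, j)\<in>S \<union> prod.swap ` S. over_sign v n w i j)"
    by (rule sum.union_disjoint[symmetric]) (use fin in \<open>auto simp: S_def\<close>)
  also have "S \<union> prod.swap ` S = Sigma {..<n} (\<lambda>i. {j. j < n \<and> j \<noteq> i \<and> \<not> adjacent n i j})"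
    unfolding S_def using adjacent_sym by (auto simp: image_iff)
  finally show ?thesis by (simp add: sum.Sigma)
qed

section \<open>Changing the direction of projection\<close>

lemma frame_aff:
  "(\<lambda>s t. frame1 u u' (A + s *\<^sub>R B - t *\<^sub>R C)) = aff (frame1 u u' A) (frame1 u u' B) (frame1 u u' C)"
  "(\<lambda>s t. frame2 u u' (A + s *\<^sub>R B - t *\<^sub>R C)) = aff (frame2 u u' A) (frame2 u u' B) (frame2 u u' C)"
  "(\<lambda>s t. frame3 u u' (A + s *\<^sub>R B - t *\<^sub>R C)) = aff (frame3 u u' A) (frame3 u u' B) (frame3 u u' C)"
  by (simp_all add: fun_eq_iff aff_def frame_linear)

lemma vertex_not_aligned:
  assumes gp: "general_position v n w" and ij: "i < n" "j < n" "i \<noteq> j" "\<not> adjacent n i j"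
    and k: "k < n" and pq: "p \<in> seg v n i" "q \<in> seg v n j" and vertex: "p = v k \<or> q = v k"
  shows "\<not> (\<exists>\<tau>. p - q = \<tau> *\<^sub>R w)"
proof
  assume "\<exists>\<tau>. p - q = \<tau> *\<^sub>R w"
  then have "proj w p = proj w q" using proj_eq_iff[OF general_position_nonzero[OF gp]] by blast
  then have "proj w (v k) \<in> pseg w v n i \<inter> pseg w v n j"
    using pq vertex unfolding pseg_def by (metis IntI imageI)
  then show False using general_position_vertex[OF gp ij k] by blast
qed

lemma boundary_of_edge_pair_not_aligned:
  assumes gp: "general_position v n w" and ij: "i < n" "j < n" "i \<noteq> j" "\<not> adjacent n i j"
    and st: "s \<in> {0..1}" "t \<in> {0..1}" "s = 0 \<or> s = 1 \<or> t = 0 \<or> t = 1"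
  shows "\<not> (\<exists>\<tau>. (v i + s *\<^sub>R edge_dir v n i) - (v j + t *\<^sub>R edge_dir v n j) = \<tau> *\<^sub>R w)"
proof -
  have "Suc i mod n < n" "Suc j mod n < n" using ij by simp_all
  moreover have "v i + s *\<^sub>R edge_dir v n i \<in> seg v n i" "v j + t *\<^sub>R edge_dir v n j \<in> seg v n j"
    using st unfolding mem_seg_iff by blast+
  moreover have "v i + s *\<^sub>R edge_dir v n i \<in> {v i, v (Suc i mod n)} \<or>
      v j + t *\<^sub>R edge_dir v n j \<in> {v j, v (Suc j mod n)}"
    using st(3) by (auto simp: edge_dir_def)
  ultimately show ?thesis using vertex_not_aligned[OF gp ij] ij(1,2) by blast
qed

lemma transversal_square_edge_pair:
  fixes v :: "nat \<Rightarrow> real^3" and n i j :: nat and u u' :: "real^3"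
  defines "D \<equiv> \<lambda>s t. (v i + s *\<^sub>R edge_dir v n i) - (v j + t *\<^sub>R edge_dir v n j)"
  assumes K: "polygonal_knot v n" and gu: "general_position v n u" and gu': "general_position v n u'"
    and independent: "cross3 u u' \<noteq> 0"
    and ij: "i < n" "j < n" "i \<noteq> j" "\<not> adjacent n i j"
  shows "transversal_square (\<lambda>s t. frame1 u u' (D s t)) (\<lambda>s t. frame2 u u' (D s t)) (\<lambda>s t. frame3 u u' (D s t))
    (cross3 (edge_dir v n i) (edge_dir v n j) \<bullet> u) (cross3 (edge_dir v n i) (edge_dir v n j) \<bullet> u')"
proof -
  have on_segs: "v i + s *\<^sub>R edge_dir v n i \<in> seg v n i" "v j + t *\<^sub>R edge_dir v n j \<in> seg v n j"
    if "s \<in> {0..1}" "t \<in> {0..1}" for s t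
    using that unfolding mem_seg_iff by blast+
  have aligned_u: "(\<exists>\<tau>. D s t = \<tau> *\<^sub>R u) \<longleftrightarrow> frame2 u u' (D s t) = 0 \<and> frame3 u u' (D s t) = 0" for s t
    using ex_parallel_u_iff[OF independent, of "D s t" "\<lambda>_. True"] by simp
  have aligned_u': "(\<exists>\<tau>. D s t = \<tau> *\<^sub>R u') \<longleftrightarrow> frame1 u u' (D s t) = 0 \<and> frame3 u u' (D s t) = 0" for s t
    using ex_parallel_u'_iff[OF independent, of "D s t" "\<lambda>_. True"] by simp
  have nonzero: "D s t \<noteq> 0" if "s \<in> {0..1}" "t \<in> {0..1}" for s t
    using polygonal_knot_disjoint[OF K ij] on_segs[OF that] unfolding D_def by auto
  have transverse: "cross3 (edge_dir v n i) (edge_dir v n j) \<bullet> w \<noteq> 0"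
    if "general_position v n w" "\<exists>s\<in>{0..1}. \<exists>t\<in>{0..1}. \<exists>\<tau>. D s t = \<tau> *\<^sub>R w" for w
  proof -
    have "pseg w v n i \<inter> pseg w v n j \<noteq> {}"
      using that on_segs pseg_inter_nonempty_iff[OF general_position_nonzero[OF that(1)]]
      unfolding D_def by blast
    then show ?thesis using general_position_transverse[OF that(1) ij] by blast
  qed
  have boundary: "\<not> (\<exists>\<tau>. D s t = \<tau> *\<^sub>R w)"
    if "general_position v n w" "s \<in> {0..1}" "t \<in> {0..1}" "s = 0 \<or> s = 1 \<or> t = 0 \<or> t = 1" for w s t
    using boundary_of_edge_pair_not_aligned[OF that(1) ij that(2-4)] unfolding D_def .
  show ?thesis
    unfolding transversal_square_def
  proof (intro conjI ballI impI)
    show "\<not> (frame1 u u' (D s t) = 0 \<and> frame2 u u' (D s t) = 0 \<and> frame3 u u' (D s t) = 0)"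
      if "s \<in> {0..1}" "t \<in> {0..1}" for s t
      using nonzero[OF that] frame_eq_0_iff[OF independent] by blast
    show "cross3 (edge_dir v n i) (edge_dir v n j) \<bullet> u \<noteq> 0"
      if "\<exists>s\<in>{0..1}. \<exists>t\<in>{0..1}. frame2 u u' (D s t) = 0 \<and> frame3 u u' (D s t) = 0"
      using that transverse[OF gu] unfolding aligned_u[symmetric] by blast
    show "cross3 (edge_dir v n i) (edge_dir v n j) \<bullet> u' \<noteq> 0"
      if "\<exists>s\<in>{0..1}. \<exists>t\<in>{0..1}. frame1 u u' (D s t) = 0 \<and> frame3 u u' (D s t) = 0"
      using that transverse[OF gu'] unfolding aligned_u'[symmetric] by blast
    show "\<not> (frame2 u u' (D s t) = 0 \<and> frame3 u u' (D s t) = 0)"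
      "\<not> (frame1 u u' (D s t) = 0 \<and> frame3 u u' (D s t) = 0)"
      if "s \<in> {0..1}" "t \<in> {0..1}" "s = 0 \<or> s = 1 \<or> t = 0 \<or> t = 1" for s t
      using boundary[OF gu that] boundary[OF gu' that] unfolding aligned_u aligned_u' by blast+
  qed
qed

lemma over_sign_in_frame:
  fixes v :: "nat \<Rightarrow> real^3" and n i j :: nat and u u' :: "real^3"
  defines "D \<equiv> \<lambda>s t. (v i + s *\<^sub>R edge_dir v n i) - (v j + t *\<^sub>R edge_dir v n j)"
  assumes independent: "cross3 u u' \<noteq> 0"
  shows "over_sign v n u i j =
      (if meets_ray (\<lambda>s t. frame1 u u' (D s t)) (\<lambda>s t. frame2 u u' (D s t)) (\<lambda>s t. frame3 u u' (D s t))
       then sgn (cross3 (edge_dir v n i) (edge_dir v n j) \<bullet> u) else 0)"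
    and "over_sign v n u' i j =
      (if meets_ray (\<lambda>s t. frame2 u u' (D s t)) (\<lambda>s t. frame1 u u' (D s t)) (\<lambda>s t. frame3 u u' (D s t))
       then sgn (cross3 (edge_dir v n i) (edge_dir v n j) \<bullet> u') else 0)"
proof -
  have ex_seg: "(\<exists>p\<in>seg v n i. \<exists>q\<in>seg v n j. P (p - q)) \<longleftrightarrow> (\<exists>s\<in>{0..1}. \<exists>t\<in>{0..1}. P (D s t))" for P
    unfolding Bex_def mem_seg_iff D_def by blast
  have "(\<exists>\<tau>>0. D s t = \<tau> *\<^sub>R u) \<longleftrightarrow>
      0 < frame1 u u' (D s t) \<and> frame2 u u' (D s t) = 0 \<and> frame3 u u' (D s t) = 0" for s t
    using ex_parallel_u_iff[OF independent, of "D s t" "\<lambda>\<tau>. 0 < \<tau>"] by auto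
  then show "over_sign v n u i j = (if meets_ray (\<lambda>s t. frame1 u u' (D s t)) (\<lambda>s t. frame2 u u' (D s t))
      (\<lambda>s t. frame3 u u' (D s t)) then sgn (cross3 (edge_dir v n i) (edge_dir v n j) \<bullet> u) else 0)"
    unfolding over_sign_def meets_ray_def ex_seg[of "\<lambda>d. \<exists>\<tau>>0. d = \<tau> *\<^sub>R u"] by simp
  have "(\<exists>\<tau>>0. D s t = \<tau> *\<^sub>R u') \<longleftrightarrow>
      0 < frame2 u u' (D s t) \<and> frame1 u u' (D s t) = 0 \<and> frame3 u u' (D s t) = 0" for s t
    using ex_parallel_u'_iff[OF independent, of "D s t" "\<lambda>\<tau>. 0 < \<tau>"] by auto
  then show "over_sign v n u' i j = (if meets_ray (\<lambda>s t. frame2 u u' (D s t)) (\<lambda>s t. frame1 u u' (D s t))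
      (\<lambda>s t. frame3 u u' (D s t)) then sgn (cross3 (edge_dir v n i) (edge_dir v n j) \<bullet> u') else 0)"
    unfolding over_sign_def meets_ray_def ex_seg[of "\<lambda>d. \<exists>\<tau>>0. d = \<tau> *\<^sub>R u'"] by simp
qed

text \<open>The four sides of the parallelogram of differences of points of edges i and j are an edge
  minus a vertex or a vertex minus an edge; these are their quadrant fluxes in the frame of u, u'.\<close>

definition edge_vertex_flux :: "real^3 \<Rightarrow> real^3 \<Rightarrow> (nat \<Rightarrow> real^3) \<Rightarrow> nat \<Rightarrow> nat \<Rightarrow> nat \<Rightarrow> real" where
  "edge_vertex_flux u u' v n i k =
    quadrant_flux (frame u u' (v i - v k)) (frame u u' (v (Suc i mod n) - v k))"

definition vertex_edge_flux :: "real^3 \<Rightarrow> real^3 \<Rightarrow> (nat \<Rightarrow> real^3) \<Rightarrow> nat \<Rightarrow> nat \<Rightarrow> nat \<Rightarrow> real" where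
  "vertex_edge_flux u u' v n i k =
    quadrant_flux (frame u u' (v k - v i)) (frame u u' (v k - v (Suc i mod n)))"

lemma square_flux_edge_pair:
  fixes v :: "nat \<Rightarrow> real^3" and n i j :: nat and u u' :: "real^3"
  defines "D \<equiv> \<lambda>s t. (v i + s *\<^sub>R edge_dir v n i) - (v j + t *\<^sub>R edge_dir v n j)"
  shows "square_flux (\<lambda>s t. frame1 u u' (D s t)) (\<lambda>s t. frame2 u u' (D s t)) (\<lambda>s t. frame3 u u' (D s t)) =
    edge_vertex_flux u u' v n i j + vertex_edge_flux u u' v n j (Suc i mod n)
    - edge_vertex_flux u u' v n i (Suc j mod n) - vertex_edge_flux u u' v n j i"
proof -
  have "D 0 0 = v i - v j" "D 1 0 = v (Suc i mod n) - v j"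
    "D 1 1 = v (Suc i mod n) - v (Suc j mod n)" "D 0 1 = v i - v (Suc j mod n)"
    unfolding D_def edge_dir_def by (simp_all add: algebra_simps)
  then show ?thesis
    using quadrant_flux_swap[of "frame u u' (v i - v (Suc j mod n))"
        "frame u u' (v (Suc i mod n) - v (Suc j mod n))"]
      quadrant_flux_swap[of "frame u u' (v i - v j)" "frame u u' (v i - v (Suc j mod n))"]
    unfolding square_flux_def Let_def edge_vertex_flux_def vertex_edge_flux_def frame_def
    by simp
qed

lemma over_sign_change:
  assumes K: "polygonal_knot v n" and gu: "general_position v n u" and gu': "general_position v n u'"
    and independent: "cross3 u u' \<noteq> 0"
    and ij: "i < n" "j < n" "i \<noteq> j" "\<not> adjacent n i j"
  shows "over_sign v n u' i j - over_sign v n u i j =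
    edge_vertex_flux u u' v n i j + vertex_edge_flux u u' v n j (Suc i mod n)
    - edge_vertex_flux u u' v n i (Suc j mod n) - vertex_edge_flux u u' v n j i"
proof -
  define D where "D = (\<lambda>s t. (v i + s *\<^sub>R edge_dir v n i) - (v j + t *\<^sub>R edge_dir v n j))"
  define A B C where "A = v i - v j" and "B = edge_dir v n i" and "C = edge_dir v n j"
  define F G H where "F = (\<lambda>s t. frame1 u u' (D s t))" and "G = (\<lambda>s t. frame2 u u' (D s t))"
    and "H = (\<lambda>s t. frame3 u u' (D s t))"
  define Jx Jy where "Jx = frame2 u u' B * frame3 u u' C - frame3 u u' B * frame2 u u' C"
    and "Jy = frame3 u u' B * frame1 u u' C - frame1 u u' B * frame3 u u' C"
  have "D = (\<lambda>s t. A + s *\<^sub>R B - t *\<^sub>R C)"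
    unfolding D_def A_def B_def C_def by (simp add: fun_eq_iff algebra_simps)
  then have FGH: "F = aff (frame1 u u' A) (frame1 u u' B) (frame1 u u' C)"
    "G = aff (frame2 u u' A) (frame2 u u' B) (frame2 u u' C)"
    "H = aff (frame3 u u' A) (frame3 u u' B) (frame3 u u' C)"
    unfolding F_def G_def H_def by (simp_all add: frame_aff)
  define g where "g = cross3 u u' \<bullet> cross3 u u'"
  have "0 < g" using independent unfolding g_def by simp
  have J: "cross3 B C \<bullet> u = g * Jx" "cross3 B C \<bullet> u' = g * Jy"
    unfolding g_def Jx_def Jy_def
    by (rule cross_inner_u_frame[OF independent] cross_inner_u'_frame[OF independent])+
  have "transversal_square F G H (g * Jx) (g * Jy)"
    using transversal_square_edge_pair[OF K gu gu' independent ij]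
    unfolding F_def G_def H_def D_def J[unfolded B_def C_def] .
  then have "transversal_square F G H Jx Jy"
    using \<open>0 < g\<close> unfolding transversal_square_def by simp
  then have "flux_counts_ray_hits F G H Jx Jy"
    unfolding FGH Jx_def Jy_def by (rule flux_counts_ray_hits_aff)
  moreover have "over_sign v n u i j = (if meets_ray F G H then sgn Jx else 0)"
    "over_sign v n u' i j = (if meets_ray G F H then sgn Jy else 0)"
    using over_sign_in_frame[OF independent, of v n i j] \<open>0 < g\<close>
    unfolding F_def G_def H_def D_def J[unfolded B_def C_def] by (simp_all add: sgn_mult)
  ultimately show ?thesis
    using square_flux_edge_pair[where v = v and n = n and i = i and j = j and u = u and u' = u']
    unfolding flux_counts_ray_hits_def F_def G_def H_def D_def by simp
qed

section \<open>Telescoping around the polygon\<close>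

definition cyc_pred :: "nat \<Rightarrow> nat \<Rightarrow> nat" where
  "cyc_pred n i = (if i = 0 then n - 1 else i - 1)"

lemma Suc_mod_eq: "i < n \<Longrightarrow> Suc i mod n = (if Suc i = n then 0 else Suc i)"
  by (cases "Suc i = n") auto

lemma cyc_pred_less: "i < n \<Longrightarrow> cyc_pred n i < n"
  unfolding cyc_pred_def by auto

lemma Suc_cyc_pred_mod: "i < n \<Longrightarrow> Suc (cyc_pred n i) mod n = i"
  unfolding cyc_pred_def by (cases "i = 0") auto

lemma cyc_pred_Suc_mod: "j < n \<Longrightarrow> cyc_pred n (Suc j mod n) = j"
  by (auto simp: Suc_mod_eq cyc_pred_def)

lemma adjacent_iff_cyc:
  assumes "i < n" "j < n"
  shows "adjacent n i j \<longleftrightarrow> j = Suc i mod n \<or> j = cyc_pred n i"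
proof -
  have "i = Suc j mod n \<longleftrightarrow> j = cyc_pred n i"
    using cyc_pred_Suc_mod[OF assms(2)] Suc_cyc_pred_mod[OF assms(1)] by auto
  then show ?thesis unfolding adjacent_def by blast
qed

lemma bij_betw_Suc_mod: "bij_betw (\<lambda>j. Suc j mod n) {..<n} {..<n}"
proof (rule bij_betw_imageI)
  show "inj_on (\<lambda>j. Suc j mod n) {..<n}"
  proof (rule inj_onI)
    fix a b assume ab: "a \<in> {..<n}" "b \<in> {..<n}" and eq: "Suc a mod n = Suc b mod n"
    from ab have "a = cyc_pred n (Suc a mod n)" "cyc_pred n (Suc b mod n) = b"
      by (simp_all add: cyc_pred_Suc_mod)
    then show "a = b" unfolding eq by simp
  qed
  show "(\<lambda>j. Suc j mod n) ` {..<n} = {..<n}"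
  proof
    show "(\<lambda>j. Suc j mod n) ` {..<n} \<subseteq> {..<n}" by (auto simp: Suc_mod_eq)
  next
    show "{..<n} \<subseteq> (\<lambda>j. Suc j mod n) ` {..<n}"
    proof
      fix x assume "x \<in> {..<n}"
      then have "x = Suc (cyc_pred n x) mod n" "cyc_pred n x \<in> {..<n}"
        using Suc_cyc_pred_mod cyc_pred_less by auto
      then show "x \<in> (\<lambda>j. Suc j mod n) ` {..<n}" by (rule image_eqI)
    qed
  qed
qed

lemma sum_Suc_mod_reindex:
  fixes g :: "nat \<Rightarrow> 'a::comm_monoid_add"
  shows "(\<Sum>j<n. g (Suc j mod n)) = (\<Sum>j<n. g j)"
  using sum.reindex_bij_betw[OF bij_betw_Suc_mod, of g n] .

lemma sum_nonadjacent_telescope: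
  fixes g :: "nat \<Rightarrow> real"
  assumes n: "3 \<le> n" and i: "i < n"
  shows "(\<Sum>j | j < n \<and> j \<noteq> i \<and> \<not> adjacent n i j. g j - g (Suc j mod n)) =
    g (Suc (Suc i mod n) mod n) - g (cyc_pred n i)"
proof -
  define p where "p = cyc_pred n i"
  have p: "p < n" "Suc p mod n = i" unfolding p_def using cyc_pred_less Suc_cyc_pred_mod i by auto
  have distinct: "Suc i mod n \<noteq> i" "p \<noteq> i" "Suc i mod n \<noteq> p"
    using n i unfolding p_def cyc_pred_def by (auto simp: Suc_mod_eq)
  have "{j. j < n \<and> j \<noteq> i \<and> \<not> adjacent n i j} = {..<n} - {i, Suc i mod n, p}"
    using adjacent_iff_cyc[OF i] unfolding p_def by auto
  moreover have "{i, Suc i mod n, p} \<subseteq> {..<n}" using i p by auto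
  moreover have "(\<Sum>j<n. g j - g (Suc j mod n)) = 0"
    by (simp add: sum_subtractf sum_Suc_mod_reindex)
  ultimately show ?thesis
    using distinct p(2) unfolding p_def[symmetric] by (simp add: sum_diff)
qed

lemma vertex_after_next_notin_seg:
  assumes K: "polygonal_knot v n" and i: "i < n"
  shows "v (Suc (Suc i mod n) mod n) \<notin> seg v n i"
proof
  define j where "j = Suc i mod n"
  have j: "j < n" unfolding j_def using i by simp
  assume "v (Suc (Suc i mod n) mod n) \<in> seg v n i"
  then have "v (Suc j mod n) \<in> seg v n i \<inter> seg v n j" unfolding j_def using seg_endpoints by blast
  then have "v (Suc j mod n) = v j" using polygonal_knot_adjacent_inter[OF K i] unfolding j_def by blast
  then show False using polygonal_knot_edge_nondegenerate[OF K j] by simp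
qed

lemma vertex_before_notin_seg:
  assumes K: "polygonal_knot v n" and i: "i < n"
  shows "v (cyc_pred n i) \<notin> seg v n i"
proof
  define p where "p = cyc_pred n i"
  have p: "p < n" "Suc p mod n = i" unfolding p_def using i cyc_pred_less Suc_cyc_pred_mod by auto
  assume "v (cyc_pred n i) \<in> seg v n i"
  then have "v p \<in> seg v n (Suc p mod n)" unfolding p(2) by (simp add: p_def)
  then have "v p \<in> seg v n p \<inter> seg v n (Suc p mod n)" using seg_endpoints by blast
  then have "v p = v (Suc p mod n)" using polygonal_knot_adjacent_inter[OF K p(1)] by blast
  then show False using polygonal_knot_edge_nondegenerate[OF K p(1)] by simp
qed

lemma abs_edge_vertex_flux_diff_le:
  assumes independent: "cross3 u u' \<noteq> 0" and k: "v k \<notin> seg v n i"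
  shows "\<bar>edge_vertex_flux u u' v n i k - vertex_edge_flux u u' v n i k\<bar> \<le> 1"
proof -
  define a b where "a = v i - v k" and "b = v (Suc i mod n) - v k"
  have "\<forall>l\<in>{0..1}. \<not> ((1-l) * frame1 u u' a + l * frame1 u u' b = 0 \<and>
      (1-l) * frame2 u u' a + l * frame2 u u' b = 0 \<and> (1-l) * frame3 u u' a + l * frame3 u u' b = 0)"
  proof (intro ballI notI)
    fix l :: real assume l: "l \<in> {0..1}"
    assume "(1-l) * frame1 u u' a + l * frame1 u u' b = 0 \<and>
      (1-l) * frame2 u u' a + l * frame2 u u' b = 0 \<and> (1-l) * frame3 u u' a + l * frame3 u u' b = 0"
    then have "(1-l) *\<^sub>R a + l *\<^sub>R b = 0"
      using frame_eq_0_iff[OF independent, of "(1-l) *\<^sub>R a + l *\<^sub>R b"] by (simp add: frame_linear)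
    then have "v k = v i + l *\<^sub>R edge_dir v n i"
      unfolding a_def b_def edge_dir_def by (simp add: algebra_simps)
    then show False using k l unfolding mem_seg_iff by blast
  qed
  then show ?thesis
    using quadrant_flux_minus_reflection
    unfolding edge_vertex_flux_def vertex_edge_flux_def frame_def a_def[symmetric] b_def[symmetric]
      minus_diff_eq[of "v i", symmetric] minus_diff_eq[of "v (Suc i mod n)", symmetric]
    by (simp add: frame_linear)
qed

lemma writhe_change_eq:
  fixes v :: "nat \<Rightarrow> real^3" and n :: nat and u u' :: "real^3"
  defines "E \<equiv> edge_vertex_flux u u' v n" and "V \<equiv> vertex_edge_flux u u' v n"
  assumes K: "polygonal_knot v n" and gu: "general_position v n u" and gu': "general_position v n u'"
    and independent: "cross3 u u' \<noteq> 0"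
  shows "writhe v n u' - writhe v n u =
    (\<Sum>i<n. (E i (Suc (Suc i mod n) mod n) - V i (Suc (Suc i mod n) mod n))
      - (E i (cyc_pred n i) - V i (cyc_pred n i)))"
proof -
  have n: "3 \<le> n" by (rule polygonal_knot_ge_3[OF K])
  define J where "J i = {j. j < n \<and> j \<noteq> i \<and> \<not> adjacent n i j}" for i
  have "writhe v n u' - writhe v n u = (\<Sum>i<n. \<Sum>j\<in>J i. over_sign v n u' i j - over_sign v n u i j)"
    unfolding writhe_eq_sum_over_sign[OF K gu] writhe_eq_sum_over_sign[OF K gu'] J_def
    by (simp add: sum_subtractf)
  also have "\<dots> = (\<Sum>i<n. \<Sum>j\<in>J i. E i j - E i (Suc j mod n)) + (\<Sum>i<n. \<Sum>j\<in>J i. V j (Suc i mod n) - V j i)"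
    unfolding sum.distrib[symmetric] E_def V_def
    by (intro sum.cong refl) (auto simp: J_def over_sign_change[OF K gu gu' independent])
  also have "(\<Sum>i<n. \<Sum>j\<in>J i. V j (Suc i mod n) - V j i) = (\<Sum>j<n. \<Sum>i\<in>J j. V j (Suc i mod n) - V j i)"
    using sum.swap_restrict[of "{..<n}" "{..<n}" "\<lambda>i j. V j (Suc i mod n) - V j i"
        "\<lambda>i j. j \<noteq> i \<and> \<not> adjacent n i j"] adjacent_sym
    unfolding J_def by (simp add: conj_commute eq_commute[of i j for i j :: nat])
  also have "\<dots> = (\<Sum>j<n. - (V j (Suc (Suc j mod n) mod n) - V j (cyc_pred n j)))"
  proof (intro sum.cong refl)
    fix j assume "j \<in> {..<n}"
    have "(\<Sum>i\<in>J j. V j (Suc i mod n) - V j i) = - (\<Sum>i\<in>J j. V j i - V j (Suc i mod n))"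
      by (simp add: sum_negf[symmetric])
    then show "(\<Sum>i\<in>J j. V j (Suc i mod n) - V j i) = - (V j (Suc (Suc j mod n) mod n) - V j (cyc_pred n j))"
      using sum_nonadjacent_telescope[OF n, of j "V j"] \<open>j \<in> {..<n}\<close> unfolding J_def by simp
  qed
  also have "(\<Sum>i<n. \<Sum>j\<in>J i. E i j - E i (Suc j mod n)) =
      (\<Sum>i<n. E i (Suc (Suc i mod n) mod n) - E i (cyc_pred n i))"
    unfolding J_def using sum_nonadjacent_telescope[OF n] by (intro sum.cong refl) simp
  finally show ?thesis by (simp add: sum.distrib[symmetric] algebra_simps)
qed

lemma abs_writhe_change_le:
  assumes K: "polygonal_knot v n" and gu: "general_position v n u" and gu': "general_position v n u'"
    and independent: "cross3 u u' \<noteq> 0"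
  shows "\<bar>writhe v n u' - writhe v n u\<bar> \<le> 2 * real n"
proof -
  define d where "d i k = edge_vertex_flux u u' v n i k - vertex_edge_flux u u' v n i k" for i k
  have "\<bar>writhe v n u' - writhe v n u\<bar> = \<bar>\<Sum>i<n. d i (Suc (Suc i mod n) mod n) - d i (cyc_pred n i)\<bar>"
    unfolding writhe_change_eq[OF K gu gu' independent] d_def ..
  also have "\<dots> \<le> (\<Sum>i<n. \<bar>d i (Suc (Suc i mod n) mod n) - d i (cyc_pred n i)\<bar>)"
    by (rule sum_abs)
  also have "\<dots> \<le> (\<Sum>i<n. 2)"
  proof (rule sum_mono)
    fix i assume "i \<in> {..<n}"
    then show "\<bar>d i (Suc (Suc i mod n) mod n) - d i (cyc_pred n i)\<bar> \<le> 2"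
      using abs_edge_vertex_flux_diff_le[OF independent vertex_after_next_notin_seg[OF K]]
        abs_edge_vertex_flux_diff_le[OF independent vertex_before_notin_seg[OF K]]
      unfolding d_def by (smt (verit) lessThan_iff)
  qed
  finally show ?thesis by simp
qed

lemma abs_writhe_le_card_crossings: "\<bar>writhe v n w\<bar> \<le> real (card (crossings v n w))"
proof -
  have "\<bar>writhe v n w\<bar> \<le> (\<Sum>(i, j)\<in>crossings v n w. \<bar>crossing_sign v n w i j\<bar>)"
    unfolding writhe_def case_prod_beta by (rule sum_abs)
  also have "\<dots> \<le> (\<Sum>(i, j)\<in>crossings v n w. 1)"
    by (intro sum_mono) (auto simp: crossing_sign_def abs_sgn_eq)
  finally show ?thesis by simp
qed

lemma crossings_parallel:
  assumes "cross3 u u' = 0" "u \<noteq> 0" "u' \<noteq> 0"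
  shows "crossings v n u' = crossings v n u"
proof -
  have "collinear {0, u, u'}" using assms(1) cross_eq_0 by blast
  then obtain k where k: "u' = k *\<^sub>R u" using assms(2,3) collinear_lemma by blast
  then have "proj u' = proj u" using assms(3) proj_scaleR_direction[of k u] by auto
  then show ?thesis unfolding crossings_def pseg_def by simp
qed

theorem theorem3p3:
  fixes v :: "nat \<Rightarrow> real^3" and n :: nat and u u' :: "real^3"
  assumes "polygonal_knot v n"
    and "general_position v n u"
    and "general_position v n u'"
  shows "real (card (crossings v n u')) \<ge> (\<bar>writhe v n u\<bar> - 3 * real n) / 16"
proof -
  have "\<bar>writhe v n u\<bar> \<le> real (card (crossings v n u')) + 2 * real n"
  proof (cases "cross3 u u' = 0")
    case True
    then have "crossings v n u' = crossings v n u"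
      by (rule crossings_parallel[OF _ general_position_nonzero[OF assms(2)]
            general_position_nonzero[OF assms(3)]])
    then show ?thesis using abs_writhe_le_card_crossings[of v n u] by simp
  next
    case False
    then show ?thesis
      using abs_writhe_change_le[OF assms False] abs_writhe_le_card_crossings[of v n u'] by linarith
  qed
  then have "\<bar>writhe v n u\<bar> - 3 * real n \<le> 16 * real (card (crossings v n u'))" by linarith
  then show ?thesis by simp
qed

end
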